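(* Let $\Omega$ be the space of locally finite counting measures on $\mathbb{R}$ with its usual $\sigma$-field, let $\mathbb{P}$ be the law of a stationary Poisson process on $\mathbb{R}$ with intensity 1, and let $N(\omega):=\omega$. Equip $\Omega$ with the flow $\theta_{(a,b)}\omega:=\omega(\cdot+b)$, $(a,b)\in\mathbb{R}^2$ (shift of $\omega$ by $b$). Define random measures on $\mathbb{R}^2$ by $\xi(C):=\sum_{y:\,N(\{y\})>0}\lambda_1(\{x\in\mathbb{R}:(x,y)\in C\})$ (one-dimensional Lebesgue measure on the horizontal lines through the points of $N$ on the $y$-axis) and $\eta:=\lambda_2$ (Lebesgue measure on $\mathbb{R}^2$). Then $\xi$ and $\eta$ are diffuse, jointly stationary and ergodic with common intensity 1, but there is no allocation $\tau:\Omega\times\mathbb{R}^2\to\mathbb{R}^2\cup\{\infty\}$ balancing $\xi$ and $\eta$.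
   Context: An allocation (on $\mathbb{R}^2$ for the flow $(\theta_z)$) is a measurable map $\tau:\Omega\times\mathbb{R}^2\to\mathbb{R}^2\cup\{\infty\}$ with $\tau(\theta_y\omega,x-y)=\tau(\omega,x)-y$ for all $x,y\in\mathbb{R}^2$ and $\mathbb{P}$-a.e. $\omega$. It balances $\xi$ and $\eta$ if a.s. $\xi(\{s:\tau(s)=\infty\})=0$ and $\int\mathbf{1}\{\tau(s)\in C\}\,\xi(ds)=\eta(C)$ for all Borel $C\subset\mathbb{R}^2$. $\lambda_1,\lambda_2$ denote one- and two-dimensional Lebesgue measure. *)

theory Defs
  imports "HOL-Probability.Probability"
begin

text \<open>A locally finite counting measure on R is represented by its point-multiplicity
  function omega :: real => nat, whose support meets every bounded interval in a finite set.\<close>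

definition Omega :: "(real \<Rightarrow> nat) set" where
  "Omega = {\<omega>. \<forall>a b. finite {x \<in> {a..b}. 0 < \<omega> x}}"

definition cnt :: "(real \<Rightarrow> nat) \<Rightarrow> real set \<Rightarrow> ennreal" where
  "cnt \<omega> B = (\<integral>\<^sup>+ x. ennreal (real (\<omega> x)) \<partial>count_space B)"

definition OmegaM :: "(real \<Rightarrow> nat) measure" where
  "OmegaM = sigma Omega
     {{\<omega> \<in> Omega. cnt \<omega> B \<in> A} | B A. B \<in> sets (borel :: real measure) \<and> A \<in> sets (borel :: ennreal measure)}"

definition poisson_law :: "(real \<Rightarrow> nat) measure \<Rightarrow> bool" where
  "poisson_law P \<longleftrightarrow> prob_space P \<and> sets P = sets OmegaM \<and>
     (\<forall>(n::nat) (B :: nat \<Rightarrow> real set) (k :: nat \<Rightarrow> nat).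
        (\<forall>i<n. B i \<in> sets borel \<and> bounded (B i)) \<longrightarrow> disjoint_family_on B {..<n} \<longrightarrow>
        emeasure P {\<omega> \<in> Omega. \<forall>i<n. cnt \<omega> (B i) = of_nat (k i)} =
          (\<Prod>i<n. ennreal (exp (- measure lborel (B i)) * measure lborel (B i) ^ k i / fact (k i))))"

definition theta :: "real \<times> real \<Rightarrow> (real \<Rightarrow> nat) \<Rightarrow> (real \<Rightarrow> nat)" where
  "theta z \<omega> = (\<lambda>t. \<omega> (t + snd z))"

definition xi_fun :: "(real \<Rightarrow> nat) \<Rightarrow> (real \<times> real) set \<Rightarrow> ennreal" where
  "xi_fun \<omega> C = (\<integral>\<^sup>+ y. emeasure lborel {x::real. (x, y) \<in> C} \<partial>count_space {y. 0 < \<omega> y})"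

definition xi :: "(real \<Rightarrow> nat) \<Rightarrow> (real \<times> real) measure" where
  "xi \<omega> = measure_of UNIV (sets borel) (xi_fun \<omega>)"

definition eta :: "(real \<Rightarrow> nat) \<Rightarrow> (real \<times> real) measure" where
  "eta \<omega> = lborel"

text \<open>R^2 united with {infinity} is (real * real) option, None standing for infinity;
  its sigma-field consists of the sets whose trace on R^2 is Borel.\<close>
definition optM :: "(real \<times> real) option measure" where
  "optM = sigma UNIV {A. Some -` A \<in> sets (borel :: (real \<times> real) measure)}"

definition allocation ::
  "(real \<Rightarrow> nat) measure \<Rightarrow> ((real \<Rightarrow> nat) \<Rightarrow> real \<times> real \<Rightarrow> (real \<times> real) option) \<Rightarrow> bool" where
  "allocation P \<tau> \<longleftrightarrow>
     (\<lambda>(\<omega>, x). \<tau> \<omega> x) \<in> measurable (OmegaM \<Otimes>\<^sub>M borel) optM \<and>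
     (AE \<omega> in P. \<forall>x y. \<tau> (theta y \<omega>) (x - y) = map_option (\<lambda>t. t - y) (\<tau> \<omega> x))"

definition balances ::
  "(real \<Rightarrow> nat) measure \<Rightarrow> ((real \<Rightarrow> nat) \<Rightarrow> real \<times> real \<Rightarrow> (real \<times> real) option) \<Rightarrow>
   ((real \<Rightarrow> nat) \<Rightarrow> (real \<times> real) measure) \<Rightarrow> ((real \<Rightarrow> nat) \<Rightarrow> (real \<times> real) measure) \<Rightarrow> bool" where
  "balances P \<tau> \<xi> \<eta> \<longleftrightarrow>
     (AE \<omega> in P. emeasure (\<xi> \<omega>) {s. \<tau> \<omega> s = None} = 0 \<and>
        (\<forall>C \<in> sets (borel :: (real \<times> real) measure).
           (\<integral>\<^sup>+ s. indicator {s. \<exists>c\<in>C. \<tau> \<omega> s = Some c} s \<partial>\<xi> \<omega>) = emeasure (\<eta> \<omega>) C))"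

definition diffuse :: "((real \<Rightarrow> nat) \<Rightarrow> (real \<times> real) measure) \<Rightarrow> bool" where
  "diffuse \<xi> \<longleftrightarrow> (\<forall>\<omega>\<in>Omega. \<forall>z. emeasure (\<xi> \<omega>) {z} = 0)"

definition random_measure :: "((real \<Rightarrow> nat) \<Rightarrow> (real \<times> real) measure) \<Rightarrow> bool" where
  "random_measure \<xi> \<longleftrightarrow> (\<forall>\<omega>\<in>Omega. sets (\<xi> \<omega>) = sets borel) \<and>
     (\<forall>C \<in> sets (borel :: (real \<times> real) measure). (\<lambda>\<omega>. emeasure (\<xi> \<omega>) C) \<in> borel_measurable OmegaM)"

definition jointly_stationary ::
  "(real \<Rightarrow> nat) measure \<Rightarrow> ((real \<Rightarrow> nat) \<Rightarrow> (real \<times> real) measure) \<Rightarrow>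
   ((real \<Rightarrow> nat) \<Rightarrow> (real \<times> real) measure) \<Rightarrow> bool" where
  "jointly_stationary P \<xi> \<eta> \<longleftrightarrow>
     (\<forall>(n::nat) (Cs :: nat \<Rightarrow> (real \<times> real) set) (Ds :: nat \<Rightarrow> (real \<times> real) set) (z :: real \<times> real).
        (\<forall>i<n. Cs i \<in> sets borel \<and> Ds i \<in> sets borel) \<longrightarrow>
        distr P (Pi\<^sub>M {..<n} (\<lambda>_. (borel :: ennreal measure) \<Otimes>\<^sub>M (borel :: ennreal measure)))
          (\<lambda>\<omega>. \<lambda>i\<in>{..<n}. (emeasure (\<xi> \<omega>) ((\<lambda>c. c + z) ` Cs i), emeasure (\<eta> \<omega>) ((\<lambda>c. c + z) ` Ds i)))
        = distr P (Pi\<^sub>M {..<n} (\<lambda>_. (borel :: ennreal measure) \<Otimes>\<^sub>M (borel :: ennreal measure)))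
          (\<lambda>\<omega>. \<lambda>i\<in>{..<n}. (emeasure (\<xi> \<omega>) (Cs i), emeasure (\<eta> \<omega>) (Ds i))))"

definition flow_stationary :: "(real \<Rightarrow> nat) measure \<Rightarrow> bool" where
  "flow_stationary P \<longleftrightarrow> (\<forall>z. theta z \<in> measurable OmegaM OmegaM \<and> distr P OmegaM (theta z) = P)"

definition flow_ergodic :: "(real \<Rightarrow> nat) measure \<Rightarrow> bool" where
  "flow_ergodic P \<longleftrightarrow> (\<forall>A \<in> sets OmegaM. (\<forall>z. theta z -` A \<inter> Omega = A) \<longrightarrow>
       measure P A = 0 \<or> measure P A = 1)"

definition flow_adapted :: "((real \<Rightarrow> nat) \<Rightarrow> (real \<times> real) measure) \<Rightarrow> bool" where
  "flow_adapted \<xi> \<longleftrightarrow> (\<forall>\<omega>\<in>Omega. \<forall>z. \<forall>C \<in> sets (borel :: (real \<times> real) measure).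
       emeasure (\<xi> (theta z \<omega>)) C = emeasure (\<xi> \<omega>) ((\<lambda>c. c + z) ` C))"

definition has_intensity ::
  "(real \<Rightarrow> nat) measure \<Rightarrow> ((real \<Rightarrow> nat) \<Rightarrow> (real \<times> real) measure) \<Rightarrow> real \<Rightarrow> bool" where
  "has_intensity P \<xi> \<gamma> \<longleftrightarrow> (\<forall>C \<in> sets (borel :: (real \<times> real) measure).
       (\<integral>\<^sup>+ \<omega>. emeasure (\<xi> \<omega>) C \<partial>P) = ennreal \<gamma> * emeasure lborel C)"

end

theory Submission
  imports Defs
begin

text \<open>The shifts \<open>\<theta>\<close> by \<open>(x, 0)\<close> act trivially on \<open>\<Omega>\<close>, so covariance of an allocation forces
  \<open>\<tau>(\<omega>, (x, y)) = \<tau>(\<omega>, (0, y)) + (x, 0)\<close>: every horizontal line carrying \<open>\<xi>\<close> is sent into a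
  single horizontal line. Only countably many lines carry \<open>\<xi>\<close>, and countably many lines are
  Lebesgue null, so no allocation can transport \<open>\<xi>\<close> onto \<open>\<lambda>\<^sub>2\<close>.

  Stationarity holds because the Poisson law is determined by its values on count events, which
  are shift invariant. Ergodicity follows from mixing: an event is approximated by one depending
  on the points in a bounded window, and such an event is independent of its translate moving the
  window off itself. The intensity of \<open>\<xi>\<close> comes from the Campbell formula for the support of the
  Poisson process, which for indicators is proved by counting the dyadic cells hit by the process.\<close>

lemma OmegaM_generator_Pow:
  "{{\<omega> \<in> Omega. cnt \<omega> B \<in> A} | B A. B \<in> sets (borel :: real measure) \<and> A \<in> sets (borel :: ennreal measure)} \<subseteq> Pow Omega"
  by auto

lemma space_OmegaM[simp]: "space OmegaM = Omega"
  unfolding OmegaM_def by (rule space_measure_of[OF OmegaM_generator_Pow])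

lemma sets_OmegaM: "sets OmegaM = sigma_sets Omega
   {{\<omega> \<in> Omega. cnt \<omega> B \<in> A} | B A. B \<in> sets (borel :: real measure) \<and> A \<in> sets (borel :: ennreal measure)}"
  unfolding OmegaM_def by (rule sets_measure_of[OF OmegaM_generator_Pow])

lemma borel_measurable_cnt[measurable]:
  assumes "B \<in> sets borel"
  shows "(\<lambda>\<omega>. cnt \<omega> B) \<in> borel_measurable OmegaM"
proof (rule measurableI)
  fix A :: "ennreal set" assume "A \<in> sets borel"
  then have "(\<lambda>\<omega>. cnt \<omega> B) -` A \<inter> space OmegaM = {\<omega> \<in> Omega. cnt \<omega> B \<in> A}" by auto
  also have "\<dots> \<in> sets OmegaM" unfolding sets_OmegaM
    using assms \<open>A \<in> sets borel\<close> by (intro sigma_sets.Basic) blast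
  finally show "(\<lambda>\<omega>. cnt \<omega> B) -` A \<inter> space OmegaM \<in> sets OmegaM" .
qed auto

definition count_measure :: "(real \<Rightarrow> nat) \<Rightarrow> real measure" where
  "count_measure \<omega> = density (count_space UNIV) (\<lambda>x. ennreal (real (\<omega> x)))"

lemma cnt_eq_emeasure: "cnt \<omega> B = emeasure (count_measure \<omega>) B"
  unfolding cnt_def count_measure_def
  by (simp add: emeasure_density nn_integral_count_space_indicator)

lemma sets_count_measure[simp]: "sets (count_measure \<omega>) = UNIV"
  by (simp add: count_measure_def)

lemma cnt_mono: "A \<subseteq> B \<Longrightarrow> cnt \<omega> A \<le> cnt \<omega> B"
  unfolding cnt_eq_emeasure by (intro emeasure_mono) auto

lemma cnt_UN_disjoint:
  assumes "disjoint_family_on D J" "finite J"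
  shows "cnt \<omega> (\<Union>j\<in>J. D j) = (\<Sum>j\<in>J. cnt \<omega> (D j))"
  unfolding cnt_eq_emeasure using assms by (intro sum_emeasure[symmetric]) auto

lemma cnt_zero_iff: "cnt \<omega> B = 0 \<longleftrightarrow> (\<forall>x\<in>B. \<omega> x = 0)"
  unfolding cnt_def by (simp add: nn_integral_0_iff_AE AE_count_space)

lemma cnt_bounded_nat:
  assumes "\<omega> \<in> Omega" "bounded B"
  obtains k where "cnt \<omega> B = of_nat k"
proof -
  obtain c where "B \<subseteq> cbox (-c) c" using assms(2) bounded_subset_cbox_symmetric[of B] by auto
  then obtain a b :: real where ab: "B \<subseteq> {a..b}" by auto
  have "finite {x \<in> {a..b}. 0 < \<omega> x}" using assms(1) unfolding Omega_def by auto
  then have fin: "finite {x \<in> B. 0 < \<omega> x}" by (rule rev_finite_subset) (use ab in auto)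
  have "cnt \<omega> B = (\<Sum>x\<in>{x \<in> B. 0 < \<omega> x}. ennreal (real (\<omega> x)))"
    unfolding cnt_def using fin by (intro nn_integral_count_space') auto
  also have "\<dots> = of_nat (\<Sum>x\<in>{x \<in> B. 0 < \<omega> x}. \<omega> x)"
    by (simp add: ennreal_of_nat_eq_real_of_nat of_nat_sum[symmetric] sum_ennreal[symmetric]
        del: of_nat_sum)
  finally show thesis by (rule that)
qed

lemma UN_symmetric_Ico: "(\<Union>m::nat. {- real m..<real m}) = UNIV"
proof (intro set_eqI iffI)
  fix x :: real
  obtain m :: nat where "\<bar>x\<bar> < real m" using reals_Archimedean2 by blast
  then show "x \<in> (\<Union>m::nat. {- real m..<real m})" by (intro UN_I[of m]) auto
qed auto

lemma emeasure_eq_SUP_Ico: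
  assumes "B \<in> sets M" "\<And>m::nat. {- real m..<real m} \<in> sets M"
  shows "emeasure M B = (SUP m::nat. emeasure M (B \<inter> {- real m..<real m}))"
proof -
  have "(SUP m. emeasure M (B \<inter> {- real m..<real m})) = emeasure M (\<Union>m. B \<inter> {- real m..<real m})"
    using assms by (intro SUP_emeasure_incseq) (auto simp: incseq_def)
  then show ?thesis using UN_symmetric_Ico by simp
qed

lemma countable_support: "\<omega> \<in> Omega \<Longrightarrow> countable {y. 0 < \<omega> y}"
proof -
  assume \<omega>: "\<omega> \<in> Omega"
  have "{y. 0 < \<omega> y} = (\<Union>m::nat. {y \<in> {- real m..real m}. 0 < \<omega> y})"
    using UN_symmetric_Ico by force
  moreover have "countable (\<Union>m::nat. {y \<in> {- real m..real m}. 0 < \<omega> y})"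
    using \<omega> unfolding Omega_def by (intro countable_UN) (auto intro: countable_finite)
  ultimately show ?thesis by simp
qed

lemma cnt_theta: "cnt (theta z \<omega>) B = cnt \<omega> ((\<lambda>x. x + snd z) ` B)"
proof -
  have "bij_betw (\<lambda>x. x + snd z) B ((\<lambda>x. x + snd z) ` B)" by (auto simp: bij_betw_def inj_on_def)
  then show ?thesis unfolding cnt_def theta_def
    by (rule nn_integral_bij_count_space)
qed

lemma theta_in_Omega: assumes "\<omega> \<in> Omega" shows "theta z \<omega> \<in> Omega"
  unfolding Omega_def theta_def
proof (intro CollectI allI)
  fix a b
  have "finite {x \<in> {a + snd z..b + snd z}. 0 < \<omega> x}" using assms unfolding Omega_def by auto
  then have "finite ((\<lambda>x. x - snd z) ` {x \<in> {a + snd z..b + snd z}. 0 < \<omega> x})" by auto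
  then show "finite {x \<in> {a..b}. 0 < \<omega> (x + snd z)}"
  proof (rule rev_finite_subset, intro subsetI)
    fix x assume "x \<in> {x \<in> {a..b}. 0 < \<omega> (x + snd z)}"
    then show "x \<in> (\<lambda>x. x - snd z) ` {x \<in> {a + snd z..b + snd z}. 0 < \<omega> x}"
      by (intro image_eqI[where x="x + snd z"]) auto
  qed
qed

lemma borel_translation: fixes B :: "'a::euclidean_space set"
  assumes "B \<in> sets borel" shows "(\<lambda>x. x + c) ` B \<in> sets borel"
proof -
  have "(\<lambda>x. x + c) ` B = (\<lambda>x. x - c) -` B \<inter> space borel"
    by (auto simp: image_iff intro!: bexI[where x="_ - c"])
  also have "\<dots> \<in> sets borel" using assms by measurable
  finally show ?thesis .
qed

lemma measurable_theta[measurable]: "theta z \<in> OmegaM \<rightarrow>\<^sub>M OmegaM"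
proof -
  let ?G = "{{\<omega> \<in> Omega. cnt \<omega> B \<in> A} | B A. B \<in> sets (borel :: real measure) \<and> A \<in> sets (borel :: ennreal measure)}"
  have "theta z \<in> measurable OmegaM (measure_of Omega ?G (\<lambda>_. 0))"
  proof (rule measurable_measure_of[OF OmegaM_generator_Pow])
    show "theta z \<in> space OmegaM \<rightarrow> Omega" using theta_in_Omega by auto
    fix Y assume "Y \<in> ?G"
    then obtain B A where BA: "Y = {\<omega> \<in> Omega. cnt \<omega> B \<in> A}" "B \<in> sets borel" "A \<in> sets borel"
      by blast
    have "theta z -` Y \<inter> space OmegaM = {\<omega> \<in> Omega. cnt \<omega> ((\<lambda>x. x + snd z) ` B) \<in> A}"
      using BA(1) theta_in_Omega[of _ z] by (auto simp: cnt_theta)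
    also have "\<dots> \<in> sets OmegaM" unfolding sets_OmegaM
      using BA borel_translation by (intro sigma_sets.Basic) blast
    finally show "theta z -` Y \<inter> space OmegaM \<in> sets OmegaM" .
  qed
  then show ?thesis by (simp add: OmegaM_def)
qed

lemma horizontal_slice_borel:
  assumes "C \<in> sets (borel :: (real \<times> real) measure)"
  shows "{x::real. (x, y) \<in> C} \<in> sets borel"
proof -
  have "(\<lambda>x::real. (x, y)) \<in> borel_measurable borel"
    by (intro borel_measurable_continuous_onI continuous_intros)
  then have "(\<lambda>x::real. (x, y)) -` C \<inter> space borel \<in> sets borel"
    using assms by (rule measurable_sets)
  then show ?thesis by (simp add: vimage_def)
qed

lemma countably_additive_xi_fun: "countably_additive (sets borel) (xi_fun \<omega>)"
proof (rule countably_additiveI)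
  fix A :: "nat \<Rightarrow> (real \<times> real) set"
  assume A: "range A \<subseteq> sets borel" "disjoint_family A"
  have "emeasure lborel {x. (x, y) \<in> \<Union> (range A)} = (\<Sum>i. emeasure lborel {x. (x, y) \<in> A i})" for y
  proof -
    have "{x. (x, y) \<in> \<Union> (range A)} = (\<Union>i. {x. (x, y) \<in> A i})" by auto
    moreover have "(\<Sum>i. emeasure lborel {x. (x, y) \<in> A i}) = emeasure lborel (\<Union>i. {x. (x, y) \<in> A i})"
      using A by (intro suminf_emeasure) (auto simp: disjoint_family_on_def intro!: horizontal_slice_borel)
    ultimately show ?thesis by simp
  qed
  then have "xi_fun \<omega> (\<Union> (range A)) = (\<integral>\<^sup>+ y. (\<Sum>i. emeasure lborel {x. (x, y) \<in> A i}) \<partial>count_space {y. 0 < \<omega> y})"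
    unfolding xi_fun_def by simp
  also have "\<dots> = (\<Sum>i. xi_fun \<omega> (A i))" unfolding xi_fun_def
    by (rule nn_integral_suminf) auto
  finally show "(\<Sum>i. xi_fun \<omega> (A i)) = xi_fun \<omega> (\<Union> (range A))" by simp
qed

lemma sets_xi[simp]: "sets (xi \<omega>) = sets borel"
  unfolding xi_def using sets.sets_measure_of_eq[of "borel :: (real \<times> real) measure"] by simp

lemma emeasure_xi: "C \<in> sets borel \<Longrightarrow> emeasure (xi \<omega>) C = xi_fun \<omega> C"
  unfolding xi_def
  using emeasure_measure_of_sigma[OF sets.sigma_algebra_axioms[of "borel :: (real \<times> real) measure"] _
      countably_additive_xi_fun[of \<omega>]]
  by (simp add: positive_def xi_fun_def)

lemma emeasure_lborel_translation:
  fixes S :: "'a::euclidean_space set"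
  assumes "S \<in> sets borel"
  shows "emeasure lborel ((\<lambda>x. x + c) ` S) = emeasure lborel S"
proof -
  have "emeasure lborel S = emeasure (distr lborel borel ((+) (- c))) S" by (simp add: lborel_distr_plus)
  also have "\<dots> = emeasure lborel ((+) (- c) -` S \<inter> space lborel)"
    using assms by (intro emeasure_distr) auto
  also have "(+) (- c) -` S \<inter> space lborel = (\<lambda>x. x + c) ` S"
    by (auto simp: image_iff intro!: bexI[where x="_ - c"])
  finally show ?thesis by simp
qed

lemma measure_lborel_translation:
  fixes S :: "'a::euclidean_space set" assumes "S \<in> sets borel"
  shows "measure lborel ((\<lambda>x. x + c) ` S) = measure lborel S"
  using emeasure_lborel_translation[OF assms] by (simp add: measure_def)

lemma diffuse_xi: "diffuse xi"
  unfolding diffuse_def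
proof (intro ballI allI)
  fix \<omega> :: "real \<Rightarrow> nat" and z :: "real \<times> real"
  have "emeasure lborel {x. (x, y) \<in> {z}} = 0" for y
    using emeasure_mono[of "{x. (x, y) \<in> {z}}" "{fst z}" lborel] by force
  then show "emeasure (xi \<omega>) {z} = 0" by (simp add: emeasure_xi xi_fun_def)
qed

lemma diffuse_eta: "diffuse eta"
  unfolding diffuse_def eta_def by simp

lemma horizontal_slice_translation:
  fixes a b y :: real and C :: "(real \<times> real) set"
  shows "{x. (x, y + b) \<in> (\<lambda>c. c + (a, b)) ` C} = (\<lambda>x. x + a) ` {x. (x, y) \<in> C}"
proof (intro set_eqI iffI)
  fix x assume "x \<in> {x. (x, y + b) \<in> (\<lambda>c. c + (a, b)) ` C}"
  then obtain c where c: "c \<in> C" "(x, y + b) = c + (a, b)" by auto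
  then have "c = (x - a, y)" by (cases c) auto
  with c show "x \<in> (\<lambda>x. x + a) ` {x. (x, y) \<in> C}" by (intro rev_image_eqI[of "x - a"]) auto
next
  fix x assume "x \<in> (\<lambda>x. x + a) ` {x. (x, y) \<in> C}"
  then obtain u where "(u, y) \<in> C" "x = u + a" by auto
  then show "x \<in> {x. (x, y + b) \<in> (\<lambda>c. c + (a, b)) ` C}" by (auto intro!: rev_image_eqI[of "(u, y)"])
qed

lemma emeasure_xi_theta:
  assumes C: "C \<in> sets borel"
  shows "emeasure (xi (theta z \<omega>)) C = emeasure (xi \<omega>) ((\<lambda>c. c + z) ` C)"
proof -
  obtain a b where z: "z = (a, b)" by (cases z)
  have bij: "bij_betw (\<lambda>y. y + b) {y. 0 < \<omega> (y + b)} {y. 0 < \<omega> y}"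
    by (rule bij_betwI[where g="\<lambda>y. y - b"]) auto
  have "emeasure (xi \<omega>) ((\<lambda>c. c + z) ` C) = xi_fun \<omega> ((\<lambda>c. c + z) ` C)"
    using borel_translation[OF C] by (rule emeasure_xi)
  also have "\<dots> = (\<integral>\<^sup>+ y. emeasure lborel {x. (x, y + b) \<in> (\<lambda>c. c + z) ` C} \<partial>count_space {y. 0 < \<omega> (y + b)})"
    unfolding xi_fun_def by (rule nn_integral_bij_count_space[OF bij, symmetric])
  also have "\<dots> = (\<integral>\<^sup>+ y. emeasure lborel {x. (x, y) \<in> C} \<partial>count_space {y. 0 < \<omega> (y + b)})"
    unfolding z horizontal_slice_translation
    using emeasure_lborel_translation[OF horizontal_slice_borel[OF C]] by simp
  also have "\<dots> = emeasure (xi (theta z \<omega>)) C"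
    using C by (simp add: emeasure_xi xi_fun_def theta_def z)
  finally show ?thesis by simp
qed

lemma flow_adapted_xi: "flow_adapted xi"
  unfolding flow_adapted_def by (simp add: emeasure_xi_theta)

lemma flow_adapted_eta: "flow_adapted eta"
  unfolding flow_adapted_def eta_def by (auto simp: emeasure_lborel_translation)


section \<open>Count events and the Poisson law\<close>

definition count_event :: "(nat \<Rightarrow> real set) \<Rightarrow> (nat \<Rightarrow> nat) \<Rightarrow> nat \<Rightarrow> (real \<Rightarrow> nat) set" where
  "count_event B k n = {\<omega> \<in> Omega. \<forall>i<n. cnt \<omega> (B i) = of_nat (k i)}"

definition count_events :: "real set \<Rightarrow> (real \<Rightarrow> nat) set set" where
  "count_events R = {count_event B k n | B k n. \<forall>i<n. B i \<in> sets borel \<and> bounded (B i) \<and> B i \<subseteq> R}"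

definition poisson_prob :: "(nat \<Rightarrow> real set) \<Rightarrow> (nat \<Rightarrow> nat) \<Rightarrow> nat \<Rightarrow> ennreal" where
  "poisson_prob D v N =
     (\<Prod>i<N. ennreal (exp (- measure lborel (D i)) * measure lborel (D i) ^ v i / fact (v i)))"

definition concat_at :: "nat \<Rightarrow> (nat \<Rightarrow> 'a) \<Rightarrow> (nat \<Rightarrow> 'a) \<Rightarrow> nat \<Rightarrow> 'a" where
  "concat_at n f g i = (if i < n then f i else g (i - n))"

lemma count_events_Pow: "count_events R \<subseteq> Pow Omega"
  by (auto simp: count_events_def count_event_def)

lemma Omega_in_count_events: "Omega \<in> count_events R"
  unfolding count_events_def
  by (intro CollectI exI[where x="\<lambda>_. {}"] exI[where x="\<lambda>_. 0"] exI[where x=0])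
    (simp add: count_event_def)

lemma count_events_mono: "R \<subseteq> R' \<Longrightarrow> count_events R \<subseteq> count_events R'"
  unfolding count_events_def by blast

lemma count_event_Int:
  "count_event B k n \<inter> count_event C l m = count_event (concat_at n B C) (concat_at n k l) (n + m)"
proof (intro set_eqI iffI)
  fix \<omega> assume "\<omega> \<in> count_event (concat_at n B C) (concat_at n k l) (n + m)"
  then have "\<omega> \<in> Omega" and all: "\<forall>i<n+m. cnt \<omega> (concat_at n B C i) = of_nat (concat_at n k l i)"
    by (simp_all add: count_event_def)
  moreover have "cnt \<omega> (B i) = of_nat (k i)" if "i < n" for i
    using that all[rule_format, of i] by (simp add: concat_at_def)
  moreover have "cnt \<omega> (C i) = of_nat (l i)" if "i < m" for i
    using that all[rule_format, of "n + i"] by (simp add: concat_at_def)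
  ultimately show "\<omega> \<in> count_event B k n \<inter> count_event C l m"
    by (simp add: count_event_def)
qed (auto simp: count_event_def concat_at_def)

lemma Int_stable_count_events: "Int_stable (count_events R)"
proof (rule Int_stableI)
  fix X Y assume "X \<in> count_events R" "Y \<in> count_events R"
  then obtain B k n C l m where X: "X = count_event B k n" "\<forall>i<n. B i \<in> sets borel \<and> bounded (B i) \<and> B i \<subseteq> R"
    and Y: "Y = count_event C l m" "\<forall>i<m. C i \<in> sets borel \<and> bounded (C i) \<and> C i \<subseteq> R"
    unfolding count_events_def by blast
  have "\<forall>i<n+m. concat_at n B C i \<in> sets borel \<and> bounded (concat_at n B C i) \<and> concat_at n B C i \<subseteq> R"
    using X(2) Y(2) by (auto simp: concat_at_def)
  then show "X \<inter> Y \<in> count_events R" unfolding count_events_def X Y count_event_Int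
    by blast
qed

lemma count_event_in_sets:
  assumes "\<forall>i<n. B i \<in> sets borel"
  shows "count_event B k n \<in> sets OmegaM"
proof -
  have "count_event B k n = {\<omega> \<in> space OmegaM. \<forall>i\<in>{..<n}. cnt \<omega> (B i) = of_nat (k i)}"
    unfolding count_event_def space_OmegaM by blast
  also have "\<dots> \<in> sets OmegaM"
  proof (rule sets.sets_Collect_finite_All)
    fix i assume "i \<in> {..<n}"
    then have "(\<lambda>\<omega>. cnt \<omega> (B i)) -` {of_nat (k i)} \<inter> space OmegaM \<in> sets OmegaM"
      using assms by (intro measurable_sets[OF borel_measurable_cnt]) auto
    then show "{\<omega> \<in> space OmegaM. cnt \<omega> (B i) = of_nat (k i)} \<in> sets OmegaM"
      by (simp add: vimage_def Int_def conj_commute)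
  qed simp
  finally show ?thesis .
qed

lemma count_events_subset_sets: "count_events R \<subseteq> sets OmegaM"
  unfolding count_events_def using count_event_in_sets by auto

lemma sigma_count_events_subset_sets: "sigma_sets Omega (count_events R) \<subseteq> sets OmegaM"
  using sets.sigma_sets_subset'[OF count_events_subset_sets, of Omega] sets.top[of OmegaM] by simp

lemma borel_measurable_cnt_sigma_count_events:
  assumes B: "B \<in> sets borel"
  shows "(\<lambda>\<omega>. cnt \<omega> B) \<in> borel_measurable (sigma Omega (count_events UNIV))"
proof -
  let ?M = "sigma Omega (count_events UNIV)"
  have space: "space ?M = Omega" by (rule space_measure_of[OF count_events_Pow])
  have sets: "sets ?M = sigma_sets Omega (count_events UNIV)" by (rule sets_measure_of[OF count_events_Pow])
  have "(\<lambda>\<omega>. cnt \<omega> (B \<inter> {- real m..<real m})) \<in> borel_measurable ?M" for m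
  proof (rule measurableI)
    fix A :: "ennreal set" assume "A \<in> sets borel"
    define E where "E k = (if of_nat k \<in> A then count_event (\<lambda>_. B \<inter> {- real m..<real m}) (\<lambda>_. k) 1 else {})" for k
    have "(\<lambda>\<omega>. cnt \<omega> (B \<inter> {- real m..<real m})) -` A \<inter> space ?M = (\<Union>k. E k)"
    proof (intro set_eqI iffI)
      fix \<omega> assume \<omega>: "\<omega> \<in> (\<lambda>\<omega>. cnt \<omega> (B \<inter> {- real m..<real m})) -` A \<inter> space ?M"
      then have "\<omega> \<in> Omega" by (simp add: space)
      moreover have "bounded (B \<inter> {- real m..<real m})" by (simp add: bounded_Int)
      ultimately obtain k where "cnt \<omega> (B \<inter> {- real m..<real m}) = of_nat k"
        by (rule cnt_bounded_nat)
      with \<omega> \<open>\<omega> \<in> Omega\<close> show "\<omega> \<in> (\<Union>k. E k)"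
        by (auto simp: E_def count_event_def intro!: exI[where x=k])
    qed (auto simp: E_def count_event_def space split: if_splits)
    also have "\<dots> \<in> sets ?M" unfolding sets
    proof (intro sigma_sets.Union)
      fix k
      have "count_event (\<lambda>_. B \<inter> {- real m..<real m}) (\<lambda>_. k) 1 \<in> count_events UNIV"
        unfolding count_events_def by (intro CollectI exI conjI refl) (use B in \<open>auto intro: bounded_Int\<close>)
      then show "E k \<in> sigma_sets Omega (count_events UNIV)"
        by (auto simp: E_def intro: sigma_sets.Basic sigma_sets.Empty)
    qed
    finally show "(\<lambda>\<omega>. cnt \<omega> (B \<inter> {- real m..<real m})) -` A \<inter> space ?M \<in> sets ?M" .
  qed auto
  then have "(\<lambda>\<omega>. SUP m. cnt \<omega> (B \<inter> {- real m..<real m})) \<in> borel_measurable ?M"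
    by measurable
  moreover have "cnt \<omega> B = (SUP m. cnt \<omega> (B \<inter> {- real m..<real m}))" for \<omega>
    unfolding cnt_eq_emeasure by (rule emeasure_eq_SUP_Ico) auto
  ultimately show ?thesis by simp
qed

lemma sets_OmegaM_count_events: "sets OmegaM = sigma_sets Omega (count_events UNIV)"
proof
  show "sigma_sets Omega (count_events UNIV) \<subseteq> sets OmegaM"
    by (rule sigma_count_events_subset_sets)
  show "sets OmegaM \<subseteq> sigma_sets Omega (count_events UNIV)" unfolding sets_OmegaM
  proof (rule sigma_sets_mono, clarify)
    fix B :: "real set" and A :: "ennreal set" assume "B \<in> sets borel" "A \<in> sets borel"
    then have "(\<lambda>\<omega>. cnt \<omega> B) -` A \<inter> space (sigma Omega (count_events UNIV))
        \<in> sets (sigma Omega (count_events UNIV))"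
      by (intro measurable_sets[OF borel_measurable_cnt_sigma_count_events])
    then show "{\<omega> \<in> Omega. cnt \<omega> B \<in> A} \<in> sigma_sets Omega (count_events UNIV)"
      by (simp add: count_events_Pow Int_def vimage_def conj_commute)
  qed
qed

lemma finite_family_atoms:
  fixes B :: "nat \<Rightarrow> 'a set"
  assumes B: "\<forall>i<n. B i \<in> sets M"
  obtains N :: nat and D :: "nat \<Rightarrow> 'a set" and J :: "nat \<Rightarrow> nat set"
  where "\<forall>j<N. D j \<in> sets M \<and> D j \<subseteq> (\<Union>i<n. B i)"
    "disjoint_family_on D {..<N}" "\<forall>i<n. J i \<subseteq> {..<N} \<and> B i = (\<Union>j\<in>J i. D j)"
proof -
  let ?S = "{..<n} \<rightarrow>\<^sub>E (UNIV :: bool set)"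
  define N where "N = card ?S"
  have "finite ?S" by (intro finite_PiE) auto
  then obtain h where h: "bij_betw h {0..<N} ?S"
    using ex_bij_betw_nat_finite unfolding N_def by blast
  define U where "U = (\<Union>i<n. B i)"
  define D where "D j = {x \<in> U. \<forall>i\<in>{..<n}. (x \<in> B i) = h j i}" for j
  define J where "J i = {j. j < N \<and> h j i}" for i
  have hS: "h j \<in> ?S" if "j < N" for j by (rule bij_betw_apply[OF h]) (use that in simp)
  have U: "U \<in> sets M" unfolding U_def using B by auto
  have D_sub: "D j \<subseteq> U" for j by (auto simp: D_def)
  have D_sets: "D j \<in> sets M" for j
  proof -
    have "D j = {x \<in> space M. x \<in> U \<and> (\<forall>i\<in>{..<n}. (x \<in> B i) = h j i)}"
      using sets.sets_into_space[OF U] by (auto simp: D_def)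
    also have "\<dots> \<in> sets M"
    proof (intro sets.sets_Collect_conj sets.sets_Collect_finite_All)
      show "{x \<in> space M. x \<in> U} \<in> sets M" using U sets.sets_into_space[OF U] by (simp add: Int_absorb1 Collect_conj_eq)
      fix i assume "i \<in> {..<n}"
      then have "{x \<in> space M. (x \<in> B i) = h j i} = (if h j i then B i else space M - B i)"
        using sets.sets_into_space B by auto
      then show "{x \<in> space M. (x \<in> B i) = h j i} \<in> sets M"
        using B \<open>i \<in> {..<n}\<close> by auto
    qed simp
    finally show ?thesis .
  qed
  have disj: "disjoint_family_on D {..<N}"
  proof (unfold disjoint_family_on_def, intro ballI impI)
    fix j j' assume jj: "j \<in> {..<N}" "j' \<in> {..<N}" "j \<noteq> j'"
    then have "h j \<noteq> h j'" using bij_betw_imp_inj_on[OF h] unfolding inj_on_def by auto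
    then obtain i where "i < n" "h j i \<noteq> h j' i" using PiE_ext[OF hS hS, of j j'] jj by auto
    then show "D j \<inter> D j' = {}" unfolding D_def by auto
  qed
  have B_eq: "B i = (\<Union>j\<in>J i. D j)" if i: "i < n" for i
  proof
    show "B i \<subseteq> (\<Union>j\<in>J i. D j)"
    proof
      fix x assume "x \<in> B i"
      have "(\<lambda>l\<in>{..<n}. x \<in> B l) \<in> h ` {0..<N}" using bij_betw_imp_surj_on[OF h] by auto
      then obtain j where "j < N" "h j = (\<lambda>l\<in>{..<n}. x \<in> B l)" by auto
      with \<open>x \<in> B i\<close> i show "x \<in> (\<Union>j\<in>J i. D j)" by (auto simp: D_def J_def U_def)
    qed
  qed (use i in \<open>auto simp: J_def D_def\<close>)
  show thesis
  proof (rule that[of N D J])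
    show "\<forall>j<N. D j \<in> sets M \<and> D j \<subseteq> (\<Union>i<n. B i)" using D_sets D_sub by (simp add: U_def)
    show "\<forall>i<n. J i \<subseteq> {..<N} \<and> B i = (\<Union>j\<in>J i. D j)" using B_eq by (auto simp: J_def)
  qed (rule disj)
qed

lemma count_event_disjoint:
  assumes "v \<in> {..<N} \<rightarrow>\<^sub>E (UNIV :: nat set)" "v' \<in> {..<N} \<rightarrow>\<^sub>E (UNIV :: nat set)" "v \<noteq> v'"
  shows "count_event D v N \<inter> count_event D v' N = {}"
proof -
  obtain j where "j < N" "v j \<noteq> v' j"
    using assms PiE_ext[OF assms(1,2)] by auto
  then show ?thesis by (auto simp: count_event_def)
qed

lemma count_event_eq_UN_atoms:
  fixes D :: "nat \<Rightarrow> real set"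
  assumes bounded: "\<And>j. j < N \<Longrightarrow> bounded (D j)"
    and cover: "\<And>j. j < N \<Longrightarrow> D j \<subseteq> (\<Union>i<n. B i)"
    and disj: "disjoint_family_on D {..<N}"
    and J: "\<And>i. i < n \<Longrightarrow> J i \<subseteq> {..<N}" "\<And>i. i < n \<Longrightarrow> B i = (\<Union>j\<in>J i. D j)"
  shows "count_event B k n
    = (\<Union>v\<in>{v \<in> {..<N} \<rightarrow>\<^sub>E {..(\<Sum>i<n. k i)}. \<forall>i<n. (\<Sum>j\<in>J i. v j) = k i}. count_event D v N)"
    (is "_ = (\<Union>v\<in>?V. _)")
proof -
  have cnt_B: "cnt \<omega> (B i) = (\<Sum>j\<in>J i. cnt \<omega> (D j))" if "i < n" for i \<omega>
  proof -
    have "disjoint_family_on D (J i)" using disj J(1)[OF that] by (rule disjoint_family_on_mono[rotated])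
    moreover have "finite (J i)" using J(1)[OF that] by (rule finite_subset) simp
    ultimately show ?thesis unfolding J(2)[OF that] by (rule cnt_UN_disjoint)
  qed
  have D_sub_B: "D j \<subseteq> B i" if j: "j < N" and i: "i < n" and meet: "D j \<inter> B i \<noteq> {}" for i j
  proof -
    obtain j' where j': "j' \<in> J i" "D j \<inter> D j' \<noteq> {}"
      using meet unfolding J(2)[OF i] by blast
    moreover have "j' < N" using J(1)[OF i] j'(1) by blast
    ultimately have "j = j'" using disj j unfolding disjoint_family_on_def by blast
    then show ?thesis using J(2)[OF i] j'(1) by blast
  qed
  show ?thesis
  proof (intro set_eqI iffI)
    fix \<omega> assume "\<omega> \<in> count_event B k n"
    then have om: "\<omega> \<in> Omega" and cB: "\<And>i. i < n \<Longrightarrow> cnt \<omega> (B i) = of_nat (k i)"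
      by (auto simp: count_event_def)
    define c where "c j = (SOME c. cnt \<omega> (D j) = of_nat c)" for j
    have c: "cnt \<omega> (D j) = of_nat (c j)" if j: "j < N" for j
    proof -
      obtain m where "cnt \<omega> (D j) = of_nat m" using cnt_bounded_nat[OF om bounded[OF j]] .
      then show ?thesis unfolding c_def by (rule someI)
    qed
    define v where "v = restrict c {..<N}"
    have "v j \<le> (\<Sum>i<n. k i)" if j: "j < N" for j
    proof (cases "c j = 0")
      case False
      then obtain x where x: "x \<in> D j" using c[OF j] cnt_zero_iff[of \<omega> "D j"] by auto
      then obtain i where i: "i < n" "x \<in> B i" using cover[OF j] by blast
      then have "D j \<subseteq> B i" using D_sub_B[OF j i(1)] x by blast
      then have "cnt \<omega> (D j) \<le> cnt \<omega> (B i)" by (rule cnt_mono)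
      then have "c j \<le> k i" using c[OF j] cB[OF i(1)] by simp
      also have "k i \<le> (\<Sum>i<n. k i)" using i(1) by (intro member_le_sum) auto
      finally show ?thesis using j by (simp add: v_def)
    qed (simp add: v_def j)
    moreover have "(\<Sum>j\<in>J i. v j) = k i" if i: "i < n" for i
    proof -
      have "(of_nat (\<Sum>j\<in>J i. v j) :: ennreal) = (\<Sum>j\<in>J i. cnt \<omega> (D j))"
        using J(1)[OF i] c by (auto simp: v_def intro!: sum.cong)
      then have "(of_nat (\<Sum>j\<in>J i. v j) :: ennreal) = of_nat (k i)"
        using cnt_B[OF i] cB[OF i] by simp
      then show ?thesis by (simp only: of_nat_eq_iff)
    qed
    ultimately have "v \<in> ?V" by (auto simp: v_def)
    moreover have "\<omega> \<in> count_event D v N" using om c by (auto simp: count_event_def v_def)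
    ultimately show "\<omega> \<in> (\<Union>v\<in>?V. count_event D v N)" by blast
  next
    fix \<omega> assume "\<omega> \<in> (\<Union>v\<in>?V. count_event D v N)"
    then obtain v where v: "v \<in> ?V" "\<omega> \<in> count_event D v N" by blast
    then have cD: "\<And>j. j < N \<Longrightarrow> cnt \<omega> (D j) = of_nat (v j)" by (auto simp: count_event_def)
    have "cnt \<omega> (B i) = of_nat (k i)" if i: "i < n" for i
    proof -
      have "cnt \<omega> (B i) = (\<Sum>j\<in>J i. of_nat (v j))"
        unfolding cnt_B[OF i] using J(1)[OF i] cD by (auto intro!: sum.cong)
      also have "\<dots> = of_nat (\<Sum>j\<in>J i. v j)" by simp
      also have "\<dots> = of_nat (k i)" using v(1) i by simp
      finally show ?thesis .
    qed
    then show "\<omega> \<in> count_event B k n" using v(2) by (simp add: count_event_def)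
  qed
qed

text \<open>This reduces count events to those on pairwise disjoint sets, the only ones whose
  probabilities the Poisson law prescribes.\<close>

lemma count_events_disjoint_UN:
  assumes "X \<in> count_events R"
  obtains N D V where "\<forall>j<N. D j \<in> sets borel \<and> bounded (D j)" "\<forall>j<N. D j \<subseteq> R"
    "disjoint_family_on D {..<N}" "finite V" "V \<subseteq> {..<N} \<rightarrow>\<^sub>E (UNIV :: nat set)"
    "X = (\<Union>v\<in>V. count_event D v N)"
proof -
  obtain B k n where X: "X = count_event B k n"
    and B: "\<forall>i<n. B i \<in> sets borel \<and> bounded (B i) \<and> B i \<subseteq> R"
    using assms unfolding count_events_def by blast
  have "\<forall>i<n. B i \<in> sets borel" using B by blast
  then obtain N :: nat and D J where D: "\<forall>j<N. D j \<in> sets borel \<and> D j \<subseteq> (\<Union>i<n. B i)"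
    and disj: "disjoint_family_on D {..<N}" and J: "\<forall>i<n. J i \<subseteq> {..<N} \<and> B i = (\<Union>j\<in>J i. D j)"
    by (rule finite_family_atoms)
  have D_U: "D j \<subseteq> (\<Union>i<n. B i)" if "j < N" for j using D that by blast
  have "bounded (\<Union>i<n. B i)" using B by (intro bounded_UN) auto
  then have bounded_D: "bounded (D j)" if "j < N" for j using D_U[OF that] by (rule bounded_subset)
  have "(\<Union>i<n. B i) \<subseteq> R" using B by blast
  then have D_R: "D j \<subseteq> R" if "j < N" for j using D_U[OF that] by blast
  define V where "V = {v \<in> {..<N} \<rightarrow>\<^sub>E {..(\<Sum>i<n. k i)}. \<forall>i<n. (\<Sum>j\<in>J i. v j) = k i}"
  have "finite V"
    unfolding V_def by (rule finite_subset[OF _ finite_PiE[of "{..<N}" "\<lambda>_. {..(\<Sum>i<n. k i)}"]]) auto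
  moreover have "V \<subseteq> {..<N} \<rightarrow>\<^sub>E (UNIV :: nat set)" unfolding V_def by auto
  moreover have "X = (\<Union>v\<in>V. count_event D v N)"
    unfolding X V_def using J
    by (intro count_event_eq_UN_atoms[OF bounded_D D_U disj]) simp_all
  ultimately show thesis
    using disj D bounded_D D_R by (intro that[of N D V]) auto
qed

lemma poisson_law_sets: "poisson_law P \<Longrightarrow> sets P = sets OmegaM"
  by (simp add: poisson_law_def)

lemma poisson_law_space: "poisson_law P \<Longrightarrow> space P = Omega"
  using sets_eq_imp_space_eq[OF poisson_law_sets] by simp

lemma poisson_law_prob_space: "poisson_law P \<Longrightarrow> prob_space P"
  by (simp add: poisson_law_def)

lemma measurable_poisson_law: "poisson_law P \<Longrightarrow> measurable P N = measurable OmegaM N"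
  using measurable_cong_sets[OF poisson_law_sets refl] .

lemma emeasure_count_event:
  assumes "poisson_law P" "\<forall>j<N. D j \<in> sets borel \<and> bounded (D j)" "disjoint_family_on D {..<N}"
  shows "emeasure P (count_event D v N) = poisson_prob D v N"
proof -
  have "\<forall>(n::nat) (B :: nat \<Rightarrow> real set) (k :: nat \<Rightarrow> nat).
      (\<forall>i<n. B i \<in> sets borel \<and> bounded (B i)) \<longrightarrow> disjoint_family_on B {..<n} \<longrightarrow>
      emeasure P (count_event B k n) = poisson_prob B k n"
    using assms(1) unfolding poisson_law_def count_event_def poisson_prob_def by (elim conjE)
  then show ?thesis using assms(2,3) by blast
qed

lemma emeasure_UN_count_events:
  assumes P: "poisson_law P" and D: "\<forall>j<N. D j \<in> sets borel \<and> bounded (D j)" "disjoint_family_on D {..<N}"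
    and V: "finite V" "V \<subseteq> {..<N} \<rightarrow>\<^sub>E (UNIV :: nat set)"
  shows "emeasure P (\<Union>v\<in>V. count_event D v N) = (\<Sum>v\<in>V. poisson_prob D v N)"
proof -
  have "emeasure P (\<Union>v\<in>V. count_event D v N) = (\<Sum>v\<in>V. emeasure P (count_event D v N))"
  proof (rule sum_emeasure[symmetric])
    show "(\<lambda>v. count_event D v N) ` V \<subseteq> sets P"
      using count_event_in_sets D(1) poisson_law_sets[OF P] by auto
    show "disjoint_family_on (\<lambda>v. count_event D v N) V"
      unfolding disjoint_family_on_def using V(2) count_event_disjoint by blast
  qed fact
  then show ?thesis using emeasure_count_event[OF P D] by simp
qed

lemma poisson_law_unique:
  assumes P: "poisson_law P" and Q: "poisson_law Q"
  shows "P = Q"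
proof (rule measure_eqI_generator_eq[OF Int_stable_count_events count_events_Pow,
      where M=P and N=Q and A="\<lambda>_. Omega"])
  fix X assume "X \<in> count_events UNIV"
  then obtain N D V where D: "\<forall>j<N. D j \<in> sets borel \<and> bounded (D j)"
    "disjoint_family_on D {..<N}" "finite V" "V \<subseteq> {..<N} \<rightarrow>\<^sub>E (UNIV :: nat set)"
    and X: "X = (\<Union>v\<in>V. count_event D v N)"
    by (rule count_events_disjoint_UN)
  show "emeasure P X = emeasure Q X"
    unfolding X emeasure_UN_count_events[OF P D] emeasure_UN_count_events[OF Q D] ..
next
  show "sets P = sigma_sets Omega (count_events UNIV)" "sets Q = sigma_sets Omega (count_events UNIV)"
    using poisson_law_sets[OF P] poisson_law_sets[OF Q] sets_OmegaM_count_events by simp_all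
  show "range (\<lambda>_. Omega) \<subseteq> count_events UNIV" using Omega_in_count_events by blast
  show "emeasure P Omega \<noteq> \<infinity>" for i :: nat
    using prob_space.emeasure_space_1[OF poisson_law_prob_space[OF P]] poisson_law_space[OF P] by simp
qed simp

lemma theta_vimage_count_event:
  "theta z -` count_event B k n \<inter> Omega = count_event (\<lambda>i. (\<lambda>x. x + snd z) ` B i) k n"
  by (auto simp: count_event_def cnt_theta theta_in_Omega)

lemma translation_bounded_borel:
  fixes B :: "real set" assumes "B \<in> sets borel" "bounded B"
  shows "(\<lambda>x. x + c) ` B \<in> sets borel \<and> bounded ((\<lambda>x. x + c) ` B)"
proof -
  have "(+) c ` B = (\<lambda>x. x + c) ` B" by (auto simp: add.commute)
  then show ?thesis using borel_translation[OF assms(1)] bounded_translation[OF assms(2), of c] by simp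
qed

lemma poisson_law_distr_theta:
  assumes P: "poisson_law P"
  shows "poisson_law (distr P OmegaM (theta z))"
proof -
  have mt: "theta z \<in> P \<rightarrow>\<^sub>M OmegaM"
    using measurable_theta by (simp add: measurable_poisson_law[OF P])
  show ?thesis unfolding poisson_law_def
  proof (intro conjI allI impI)
    show "prob_space (distr P OmegaM (theta z))"
      using prob_space.prob_space_distr[OF poisson_law_prob_space[OF P] mt] .
    fix n :: nat and B :: "nat \<Rightarrow> real set" and k :: "nat \<Rightarrow> nat"
    assume B: "\<forall>i<n. B i \<in> sets borel \<and> bounded (B i)" and disj: "disjoint_family_on B {..<n}"
    define B' where "B' i = (\<lambda>x. x + snd z) ` B i" for i
    have B': "\<forall>i<n. B' i \<in> sets borel \<and> bounded (B' i)"
      using B translation_bounded_borel unfolding B'_def by blast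
    have disj': "disjoint_family_on B' {..<n}"
      using disj unfolding disjoint_family_on_def B'_def by (auto; blast)
    have "emeasure (distr P OmegaM (theta z)) (count_event B k n)
        = emeasure P (theta z -` count_event B k n \<inter> space P)"
      using B by (intro emeasure_distr[OF mt] count_event_in_sets) auto
    also have "\<dots> = poisson_prob B' k n"
      unfolding poisson_law_space[OF P] theta_vimage_count_event B'_def[symmetric]
      by (rule emeasure_count_event[OF P B' disj'])
    also have "\<dots> = poisson_prob B k n" unfolding poisson_prob_def B'_def
      using B by (intro prod.cong refl) (simp add: measure_lborel_translation)
    finally show "emeasure (distr P OmegaM (theta z)) {\<omega> \<in> Omega. \<forall>i<n. cnt \<omega> (B i) = of_nat (k i)} =
          (\<Prod>i<n. ennreal (exp (- measure lborel (B i)) * measure lborel (B i) ^ k i / fact (k i)))"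
      by (simp add: count_event_def poisson_prob_def)
  qed simp
qed

lemma distr_theta_poisson:
  "poisson_law P \<Longrightarrow> distr P OmegaM (theta z) = P"
  using poisson_law_unique[OF poisson_law_distr_theta] by blast

lemma flow_stationary_poisson: "poisson_law P \<Longrightarrow> flow_stationary P"
  unfolding flow_stationary_def using measurable_theta distr_theta_poisson by blast

lemma measure_theta_vimage:
  assumes P: "poisson_law P" and S: "S \<in> sets OmegaM"
  shows "measure P (theta z -` S \<inter> Omega) = measure P S"
proof -
  have "theta z \<in> P \<rightarrow>\<^sub>M OmegaM"
    using measurable_theta by (simp add: measurable_poisson_law[OF P])
  then have "measure (distr P OmegaM (theta z)) S = measure P (theta z -` S \<inter> space P)"
    using S by (rule measure_distr)
  then show ?thesis by (simp add: distr_theta_poisson[OF P] poisson_law_space[OF P])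
qed


section \<open>The Campbell formula for the support\<close>

definition dyadic_index :: "nat \<Rightarrow> real \<Rightarrow> int" where
  "dyadic_index n x = \<lfloor>2 ^ n * x\<rfloor>"

definition dyadic_range :: "nat \<Rightarrow> int set" where
  "dyadic_range n = {- (int n * 2 ^ n)..<int n * 2 ^ n}"

definition dyadic_cell :: "nat \<Rightarrow> int \<Rightarrow> real set" where
  "dyadic_cell n k = {- real n..<real n} \<inter> {real_of_int k / 2 ^ n..<(real_of_int k + 1) / 2 ^ n}"

definition occupied_cells :: "nat \<Rightarrow> real set \<Rightarrow> int set" where
  "occupied_cells n S = dyadic_index n ` (S \<inter> {- real n..<real n})"

lemma dyadic_cell_iff: "x \<in> dyadic_cell n k \<longleftrightarrow> x \<in> {- real n..<real n} \<and> dyadic_index n x = k"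
proof -
  have "dyadic_index n x = k \<longleftrightarrow> real_of_int k \<le> 2 ^ n * x \<and> 2 ^ n * x < real_of_int k + 1"
    unfolding dyadic_index_def floor_eq_iff ..
  also have "\<dots> \<longleftrightarrow> real_of_int k / 2 ^ n \<le> x \<and> x < (real_of_int k + 1) / 2 ^ n"
    by (simp add: divide_le_eq less_divide_eq mult.commute)
  finally show ?thesis unfolding dyadic_cell_def by auto
qed

lemma dyadic_index_range:
  assumes "x \<in> {- real n..<real n}" shows "dyadic_index n x \<in> dyadic_range n"
proof -
  from assms have "- real n \<le> x" "x < real n" by auto
  then have "- (real n * 2 ^ n) \<le> 2 ^ n * x" "2 ^ n * x < real n * 2 ^ n"
    using mult_right_mono[of "- real n" x "2 ^ n"] mult_strict_right_mono[of x "real n" "2 ^ n"]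
    by (simp_all add: mult.commute)
  then show ?thesis by (simp add: dyadic_range_def dyadic_index_def le_floor_iff floor_less_iff)
qed

lemma dyadic_cell_borel[measurable]: "dyadic_cell n k \<in> sets borel"
  by (simp add: dyadic_cell_def)

lemma bounded_dyadic_cell: "bounded (dyadic_cell n k)"
  by (simp add: dyadic_cell_def bounded_Int)

lemma dyadic_cell_disjoint: "k \<noteq> k' \<Longrightarrow> dyadic_cell n k \<inter> dyadic_cell n k' = {}"
  using dyadic_cell_iff by auto

lemma UN_dyadic_cells: "(\<Union>k\<in>dyadic_range n. dyadic_cell n k) = {- real n..<real n}"
  using dyadic_cell_iff dyadic_index_range by auto

lemma emeasure_dyadic_cell: "emeasure lborel (dyadic_cell n k) \<le> ennreal (1 / 2 ^ n)"
proof -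
  have le: "real_of_int k / 2 ^ n \<le> (real_of_int k + 1) / 2 ^ n" by (intro divide_right_mono) auto
  have "emeasure lborel (dyadic_cell n k)
      \<le> emeasure lborel {real_of_int k / 2 ^ n..<(real_of_int k + 1) / 2 ^ n}"
    by (intro emeasure_mono) (auto simp: dyadic_cell_def)
  also have "\<dots> = ennreal (1 / 2 ^ n)"
    using le by (simp add: emeasure_lborel_Ico diff_divide_distrib[symmetric])
  finally show ?thesis .
qed

lemma emeasure_Int_dyadic_cell: "emeasure lborel (B \<inter> dyadic_cell n k) \<le> ennreal (1 / 2 ^ n)"
  by (rule order_trans[OF emeasure_mono emeasure_dyadic_cell]) auto

lemma emeasure_Int_dyadic_cell_finite: "emeasure lborel (B \<inter> dyadic_cell n k) \<noteq> \<top>"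
  using neq_top_trans[OF ennreal_neq_top emeasure_Int_dyadic_cell] .

lemma measure_Int_dyadic_cell: "measure lborel (B \<inter> dyadic_cell n k) \<le> 1 / 2 ^ n"
  using emeasure_Int_dyadic_cell[of B n k] emeasure_Int_dyadic_cell_finite[of B n k]
  by (simp add: emeasure_eq_ennreal_measure)

lemma sum_emeasure_dyadic_cells:
  assumes "B \<in> sets borel"
  shows "(\<Sum>k\<in>dyadic_range n. emeasure lborel (B \<inter> dyadic_cell n k)) = emeasure lborel (B \<inter> {- real n..<real n})"
proof -
  have "(\<Sum>k\<in>dyadic_range n. emeasure lborel (B \<inter> dyadic_cell n k))
      = emeasure lborel (\<Union>k\<in>dyadic_range n. B \<inter> dyadic_cell n k)"
    using assms dyadic_cell_disjoint
    by (intro sum_emeasure) (auto simp: dyadic_range_def disjoint_family_on_def)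
  then show ?thesis using UN_dyadic_cells[of n] by (simp flip: Int_UN_distrib)
qed

lemma dyadic_index_Suc: "dyadic_index n x = dyadic_index (Suc n) x div 2"
proof -
  have "dyadic_index n x = \<lfloor>(2 ^ Suc n * x) / real_of_int 2\<rfloor>" by (simp add: dyadic_index_def)
  also have "\<dots> = dyadic_index (Suc n) x div 2"
    unfolding dyadic_index_def by (rule floor_divide_real_eq_div) simp
  finally show ?thesis .
qed

lemma occupied_cells_subset: "occupied_cells n S \<subseteq> dyadic_range n"
  using dyadic_index_range by (auto simp: occupied_cells_def)

lemma finite_occupied_cells: "finite (occupied_cells n S)"
  using occupied_cells_subset by (rule finite_subset) (simp add: dyadic_range_def)

lemma incseq_card_occupied_cells: "incseq (\<lambda>n. card (occupied_cells n S))"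
proof (rule incseq_SucI)
  fix n
  have "occupied_cells n S \<subseteq> (\<lambda>k. k div 2) ` occupied_cells (Suc n) S"
    unfolding occupied_cells_def by (auto simp: dyadic_index_Suc[of n])
  then have "card (occupied_cells n S) \<le> card ((\<lambda>k. k div 2) ` occupied_cells (Suc n) S)"
    by (intro card_mono finite_imageI finite_occupied_cells)
  also have "\<dots> \<le> card (occupied_cells (Suc n) S)" by (rule card_image_le[OF finite_occupied_cells])
  finally show "card (occupied_cells n S) \<le> card (occupied_cells (Suc n) S)" .
qed

lemma eventually_dyadic_index_separates:
  assumes "x \<noteq> y" shows "eventually (\<lambda>n. dyadic_index n x \<noteq> dyadic_index n y) sequentially"
proof -
  obtain N where N: "1 / \<bar>x - y\<bar> < 2 ^ N" using real_arch_pow[of 2 "1 / \<bar>x - y\<bar>"] by auto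
  show ?thesis unfolding eventually_sequentially
  proof (intro exI allI impI notI)
    fix n assume "N \<le> n" and eq: "dyadic_index n x = dyadic_index n y"
    then have "(2::real) ^ N \<le> 2 ^ n" by (intro power_increasing) auto
    have "1 < 2 ^ N * \<bar>x - y\<bar>" using N assms by (simp add: divide_less_eq)
    also have "\<dots> \<le> 2 ^ n * \<bar>x - y\<bar>" using \<open>2 ^ N \<le> 2 ^ n\<close> by (simp add: mult_right_mono)
    moreover have "\<bar>2 ^ n * x - 2 ^ n * y\<bar> < 1"
      using eq unfolding dyadic_index_def by linarith
    ultimately show False by (simp add: right_diff_distrib[symmetric] abs_mult)
  qed
qed

lemma eventually_dyadic_index_inj:
  assumes "finite F"
  shows "eventually (\<lambda>n. inj_on (dyadic_index n) F \<and> F \<subseteq> {- real n..<real n}) sequentially"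
proof -
  have "eventually (\<lambda>n. \<forall>x\<in>F. \<forall>y\<in>F. x \<noteq> y \<longrightarrow> dyadic_index n x \<noteq> dyadic_index n y) sequentially"
    using assms eventually_dyadic_index_separates
    by (intro eventually_ball_finite ballI) (auto intro: eventually_mono)
  moreover have "eventually (\<lambda>n. x \<in> {- real n..<real n}) sequentially" for x :: real
  proof -
    obtain N :: nat where "\<bar>x\<bar> < real N" using reals_Archimedean2 by blast
    then show ?thesis
      unfolding eventually_sequentially by (intro exI[of _ N]) auto
  qed
  then have "eventually (\<lambda>n. \<forall>x\<in>F. x \<in> {- real n..<real n}) sequentially"
    using assms by (intro eventually_ball_finite) auto
  ultimately show ?thesis
    by eventually_elim (auto simp: inj_on_def)
qed

lemma card_le_SUP_card_occupied_cells:
  assumes "finite F" "F \<subseteq> S"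
  shows "of_nat (card F) \<le> (SUP n. (of_nat (card (occupied_cells n S)) :: ennreal))"
proof -
  obtain n where n: "inj_on (dyadic_index n) F" "F \<subseteq> {- real n..<real n}"
    using eventually_happens'[OF sequentially_bot eventually_dyadic_index_inj[OF assms(1)]] by blast
  have "card F = card (dyadic_index n ` F)" using card_image[OF n(1)] by simp
  also have "\<dots> \<le> card (occupied_cells n S)"
    using n(2) assms(2) unfolding occupied_cells_def
    by (intro card_mono image_mono finite_occupied_cells[unfolded occupied_cells_def]) auto
  finally have "(of_nat (card F) :: ennreal) \<le> of_nat (card (occupied_cells n S))" by simp
  also have "\<dots> \<le> (SUP n. of_nat (card (occupied_cells n S)))" by (rule SUP_upper) simp
  finally show ?thesis .
qed

lemma emeasure_count_space_eq_SUP_occupied_cells: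
  "emeasure (count_space UNIV) S = (SUP n. (of_nat (card (occupied_cells n S)) :: ennreal))"
proof (rule antisym)
  show "(SUP n. (of_nat (card (occupied_cells n S)) :: ennreal)) \<le> emeasure (count_space UNIV) S"
  proof (rule SUP_least, cases "finite S")
    case True
    fix n
    have "card (occupied_cells n S) \<le> card (S \<inter> {- real n..<real n})"
      unfolding occupied_cells_def using True by (intro card_image_le) simp
    also have "\<dots> \<le> card S" using True by (intro card_mono) auto
    finally show "of_nat (card (occupied_cells n S)) \<le> emeasure (count_space UNIV) S"
      using True by simp
  qed simp
  show "emeasure (count_space UNIV) S \<le> (SUP n. (of_nat (card (occupied_cells n S)) :: ennreal))"
  proof (cases "finite S")
    case True
    then show ?thesis using card_le_SUP_card_occupied_cells[OF True order_refl] by simp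
  next
    case False
    have "(SUP m. (of_nat m :: ennreal)) \<le> (SUP n. (of_nat (card (occupied_cells n S)) :: ennreal))"
    proof (rule SUP_least)
      fix m
      obtain F where "finite F" "card F = m" "F \<subseteq> S"
        using infinite_arbitrarily_large[OF False] by blast
      then show "of_nat m \<le> (SUP n. (of_nat (card (occupied_cells n S)) :: ennreal))"
        using card_le_SUP_card_occupied_cells by blast
    qed
    then show ?thesis using False by (simp add: ennreal_SUP_of_nat_eq_top)
  qed
qed

lemma card_occupied_cells_eq_sum:
  "(of_nat (card (occupied_cells n S)) :: ennreal)
     = (\<Sum>k\<in>dyadic_range n. if S \<inter> dyadic_cell n k = {} then 0 else 1)"
proof -
  have "occupied_cells n S = {k \<in> dyadic_range n. S \<inter> dyadic_cell n k \<noteq> {}}"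
    unfolding occupied_cells_def using dyadic_cell_iff dyadic_index_range by fastforce
  then show ?thesis
    by (simp add: sum.If_cases dyadic_range_def Int_def)
qed

text \<open>As \<open>n \<rightarrow> \<infinity>\<close> this increases to the number of support points in \<open>B\<close>, while its mean is
  computable from the Poisson void probabilities.\<close>

definition occupied_count :: "nat \<Rightarrow> real set \<Rightarrow> (real \<Rightarrow> nat) \<Rightarrow> ennreal" where
  "occupied_count n B \<omega> = (\<Sum>k\<in>dyadic_range n. if cnt \<omega> (B \<inter> dyadic_cell n k) = 0 then 0 else 1)"

lemma occupied_count_eq_card:
  "occupied_count n B \<omega> = of_nat (card (occupied_cells n ({y. 0 < \<omega> y} \<inter> B)))"
proof -
  have "({y. 0 < \<omega> y} \<inter> B) \<inter> dyadic_cell n k = {} \<longleftrightarrow> cnt \<omega> (B \<inter> dyadic_cell n k) = 0" for k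
    by (auto simp: cnt_zero_iff)
  then show ?thesis unfolding card_occupied_cells_eq_sum occupied_count_def by simp
qed

lemma support_count_eq_SUP_occupied_count:
  "emeasure (count_space UNIV) ({y. 0 < \<omega> y} \<inter> B) = (SUP n. occupied_count n B \<omega>)"
  unfolding occupied_count_eq_card by (rule emeasure_count_space_eq_SUP_occupied_cells)

lemma incseq_occupied_count: "incseq (\<lambda>n. occupied_count n B)"
  using incseq_card_occupied_cells
  unfolding occupied_count_eq_card incseq_def le_fun_def by simp

lemma borel_measurable_occupied_count[measurable]:
  assumes [measurable]: "B \<in> sets borel"
  shows "occupied_count n B \<in> borel_measurable OmegaM"
  unfolding occupied_count_def by measurable

lemma borel_measurable_support_count[measurable]:
  assumes [measurable]: "B \<in> sets borel"
  shows "(\<lambda>\<omega>. emeasure (count_space UNIV) ({y. 0 < \<omega> y} \<inter> B)) \<in> borel_measurable OmegaM"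
  unfolding support_count_eq_SUP_occupied_count by measurable

lemma nn_integral_cnt_nonzero:
  assumes P: "poisson_law P" and C: "C \<in> sets borel" "bounded C"
  shows "(\<integral>\<^sup>+\<omega>. (if cnt \<omega> C = 0 then 0 else 1) \<partial>P) = ennreal (1 - exp (- measure lborel C))"
proof -
  interpret prob_space P by (rule poisson_law_prob_space[OF P])
  let ?E = "count_event (\<lambda>_. C) (\<lambda>_. 0) 1"
  have E: "?E \<in> sets P" unfolding poisson_law_sets[OF P] using C by (intro count_event_in_sets) auto
  have "(\<integral>\<^sup>+\<omega>. (if cnt \<omega> C = 0 then 0 else 1) \<partial>P) = (\<integral>\<^sup>+\<omega>. indicator (space P - ?E) \<omega> \<partial>P)"
    by (intro nn_integral_cong) (auto simp: count_event_def poisson_law_space[OF P])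
  also have "\<dots> = emeasure P (space P) - emeasure P ?E"
    using E by (simp add: emeasure_compl)
  also have "emeasure P ?E = ennreal (exp (- measure lborel C))"
    using C emeasure_count_event[OF P, of 1 "\<lambda>_. C" "\<lambda>_. 0"] by (simp add: poisson_prob_def disjoint_family_on_def)
  also have "emeasure P (space P) - ennreal (exp (- measure lborel C)) = ennreal (1 - exp (- measure lborel C))"
    unfolding emeasure_space_1 by (subst ennreal_1[symmetric], rule ennreal_minus) simp
  finally show ?thesis .
qed

lemma nn_integral_occupied_count:
  assumes P: "poisson_law P" and B: "B \<in> sets borel"
  shows "(\<integral>\<^sup>+\<omega>. occupied_count n B \<omega> \<partial>P)
       = (\<Sum>k\<in>dyadic_range n. ennreal (1 - exp (- measure lborel (B \<inter> dyadic_cell n k))))"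
proof -
  have "(\<lambda>\<omega>. if cnt \<omega> (B \<inter> dyadic_cell n k) = 0 then 0 else 1 :: ennreal) \<in> borel_measurable P" for k
    unfolding measurable_poisson_law[OF P] using B by measurable
  then show ?thesis unfolding occupied_count_def
    using B bounded_Int[OF disjI2, OF bounded_dyadic_cell]
    by (simp add: nn_integral_sum nn_integral_cnt_nonzero[OF P])
qed

lemma one_minus_exp_le: "1 - exp (- a) \<le> (a::real)"
  using exp_ge_add_one_self[of "-a"] by simp

lemma one_minus_exp_ge:
  fixes a h :: real assumes "0 \<le> a" "a \<le> h"
  shows "a / (1 + h) \<le> 1 - exp (- a)"
proof -
  have "exp (- a) \<le> 1 / (1 + a)"
    using exp_ge_add_one_self[of a] assms by (simp add: exp_minus inverse_eq_divide frac_le)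
  then have "a / (1 + a) \<le> 1 - exp (- a)" using assms by (simp add: field_simps)
  moreover have "a / (1 + h) \<le> a / (1 + a)"
    using assms by (simp add: frac_le)
  ultimately show ?thesis by linarith
qed

lemma nn_integral_occupied_count_le:
  assumes P: "poisson_law P" and B: "B \<in> sets borel"
  shows "(\<integral>\<^sup>+\<omega>. occupied_count n B \<omega> \<partial>P) \<le> emeasure lborel B"
proof -
  have "(\<integral>\<^sup>+\<omega>. occupied_count n B \<omega> \<partial>P) \<le> (\<Sum>k\<in>dyadic_range n. emeasure lborel (B \<inter> dyadic_cell n k))"
    unfolding nn_integral_occupied_count[OF P B]
    using emeasure_Int_dyadic_cell_finite
    by (intro sum_mono) (simp add: emeasure_eq_ennreal_measure one_minus_exp_le ennreal_leI)
  also have "\<dots> \<le> emeasure lborel B"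
    unfolding sum_emeasure_dyadic_cells[OF B] using B by (intro emeasure_mono) auto
  finally show ?thesis .
qed

lemma nn_integral_occupied_count_ge:
  assumes P: "poisson_law P" and B: "B \<in> sets borel"
  shows "ennreal (1 / (1 + 1 / 2 ^ n)) * emeasure lborel (B \<inter> {- real n..<real n})
    \<le> (\<integral>\<^sup>+\<omega>. occupied_count n B \<omega> \<partial>P)"
proof -
  let ?c = "1 / (1 + 1 / 2 ^ n) :: real"
  have "ennreal ?c * emeasure lborel (B \<inter> dyadic_cell n k)
      \<le> ennreal (1 - exp (- measure lborel (B \<inter> dyadic_cell n k)))" for k
  proof -
    let ?a = "measure lborel (B \<inter> dyadic_cell n k)"
    have "?c * ?a \<le> 1 - exp (- ?a)"
      using one_minus_exp_ge[OF _ measure_Int_dyadic_cell] by simp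
    then show ?thesis
      using emeasure_Int_dyadic_cell_finite
      by (simp add: emeasure_eq_ennreal_measure ennreal_mult[symmetric] ennreal_leI)
  qed
  then have "(\<Sum>k\<in>dyadic_range n. ennreal ?c * emeasure lborel (B \<inter> dyadic_cell n k))
      \<le> (\<integral>\<^sup>+\<omega>. occupied_count n B \<omega> \<partial>P)"
    unfolding nn_integral_occupied_count[OF P B] by (rule sum_mono)
  then show ?thesis by (simp add: sum_emeasure_dyadic_cells[OF B, symmetric] sum_distrib_left)
qed

lemma LIMSEQ_dyadic_factor: "(\<lambda>n. ennreal (1 / (1 + 1 / 2 ^ n))) \<longlonglongrightarrow> 1"
proof -
  have "(\<lambda>n. 1 / (1 + (1/2::real) ^ n)) \<longlonglongrightarrow> 1 / (1 + 0)"
    by (intro tendsto_intros LIMSEQ_realpow_zero) auto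
  then show ?thesis by (intro tendsto_ennrealI[where x=1, simplified]) (simp add: power_one_over)
qed

lemma nn_integral_support_count:
  assumes P: "poisson_law P" and B: "B \<in> sets borel"
  shows "(\<integral>\<^sup>+\<omega>. emeasure (count_space UNIV) ({y. 0 < \<omega> y} \<inter> B) \<partial>P) = emeasure lborel B"
proof -
  have "occupied_count n B \<in> borel_measurable P" for n
    unfolding measurable_poisson_law[OF P] using B by measurable
  then have "(\<integral>\<^sup>+\<omega>. emeasure (count_space UNIV) ({y. 0 < \<omega> y} \<inter> B) \<partial>P)
      = (SUP n. \<integral>\<^sup>+\<omega>. occupied_count n B \<omega> \<partial>P)"
    unfolding support_count_eq_SUP_occupied_count
    by (rule nn_integral_monotone_convergence_SUP[OF incseq_occupied_count])
  also have "\<dots> = emeasure lborel B"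
  proof (rule antisym)
    have B_SUP: "emeasure lborel B = (SUP m. emeasure lborel (B \<inter> {- real m..<real m}))"
      using B by (intro emeasure_eq_SUP_Ico) auto
    show "(SUP n. \<integral>\<^sup>+\<omega>. occupied_count n B \<omega> \<partial>P) \<le> emeasure lborel B"
      by (intro SUP_least nn_integral_occupied_count_le[OF P B])
    show "emeasure lborel B \<le> (SUP n. \<integral>\<^sup>+\<omega>. occupied_count n B \<omega> \<partial>P)"
      unfolding B_SUP
    proof (rule SUP_least)
      fix m :: nat
      let ?e = "emeasure lborel (B \<inter> {- real m..<real m})"
      have "(\<lambda>n. ennreal (1 / (1 + 1 / 2 ^ n)) * ?e) \<longlonglongrightarrow> 1 * ?e"
        by (intro tendsto_mult_ennreal LIMSEQ_dyadic_factor tendsto_const) simp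
      then have lim: "(\<lambda>n. ennreal (1 / (1 + 1 / 2 ^ n)) * ?e) \<longlonglongrightarrow> ?e" by simp
      show "?e \<le> (SUP n. \<integral>\<^sup>+\<omega>. occupied_count n B \<omega> \<partial>P)"
      proof (rule LIMSEQ_le_const2[OF lim], intro exI allI impI)
        fix n assume "m \<le> n"
        then have "ennreal (1 / (1 + 1 / 2 ^ n)) * ?e
            \<le> ennreal (1 / (1 + 1 / 2 ^ n)) * emeasure lborel (B \<inter> {- real n..<real n})"
          using B by (intro mult_left_mono emeasure_mono) auto
        also have "\<dots> \<le> (\<integral>\<^sup>+\<omega>. occupied_count n B \<omega> \<partial>P)" by (rule nn_integral_occupied_count_ge[OF P B])
        also have "\<dots> \<le> (SUP n. \<integral>\<^sup>+\<omega>. occupied_count n B \<omega> \<partial>P)" by (rule SUP_upper) simp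
        finally show "ennreal (1 / (1 + 1 / 2 ^ n)) * ?e \<le> (SUP n. \<integral>\<^sup>+\<omega>. occupied_count n B \<omega> \<partial>P)" .
      qed
    qed
  qed
  finally show ?thesis .
qed

lemma nn_integral_count_space_indicator_set:
  "(\<integral>\<^sup>+y. indicator A y \<partial>count_space S) = emeasure (count_space UNIV) (S \<inter> A)"
proof -
  have "(\<lambda>y. indicator A y * indicator S y) = (indicator (S \<inter> A) :: _ \<Rightarrow> ennreal)"
    by (auto simp: indicator_def fun_eq_iff)
  then show ?thesis by (simp add: nn_integral_count_space_indicator)
qed

lemma borel_measurable_support_integral:
  assumes "f \<in> borel_measurable (borel :: real measure)"
  shows "(\<lambda>\<omega>. \<integral>\<^sup>+y. f y \<partial>count_space {y. 0 < \<omega> y}) \<in> borel_measurable OmegaM"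
  using assms
proof (induct rule: borel_measurable_induct)
  case (cong f g)
  then have "f = g" by (intro ext) simp
  with cong(4) show ?case by simp
next
  case (set A)
  then show ?case by (simp add: nn_integral_count_space_indicator_set)
next
  case (mult u c)
  then show ?case by (simp add: nn_integral_cmult)
next
  case (add u v)
  then show ?case by (simp add: nn_integral_add)
next
  case (seq U)
  have "(\<lambda>\<omega>::real \<Rightarrow> nat. \<integral>\<^sup>+y. (SUP i. U i) y \<partial>count_space {y. 0 < \<omega> y})
      = (\<lambda>\<omega>. SUP i. \<integral>\<^sup>+y. U i y \<partial>count_space {y. 0 < \<omega> y})"
    unfolding SUP_apply by (intro ext nn_integral_monotone_convergence_SUP[OF seq(4)]) simp
  moreover have "(\<lambda>\<omega>. SUP i. \<integral>\<^sup>+y. U i y \<partial>count_space {y. 0 < \<omega> y}) \<in> borel_measurable OmegaM"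
    using seq(3) by measurable
  ultimately show ?case by simp
qed

lemma campbell_support:
  assumes P: "poisson_law P" and f: "f \<in> borel_measurable (borel :: real measure)"
  shows "(\<integral>\<^sup>+\<omega>. (\<integral>\<^sup>+y. f y \<partial>count_space {y. 0 < \<omega> y}) \<partial>P) = (\<integral>\<^sup>+y. f y \<partial>lborel)"
  using f
proof (induct rule: borel_measurable_induct)
  case (cong f g)
  then have "f = g" by (intro ext) simp
  with cong(4) show ?case by simp
next
  case (set A)
  then show ?case by (simp add: nn_integral_count_space_indicator_set nn_integral_support_count[OF P])
next
  case (mult u c)
  then show ?case
    by (simp add: nn_integral_cmult borel_measurable_support_integral measurable_poisson_law[OF P])
next
  case (add u v)
  then show ?case
    by (simp add: nn_integral_add borel_measurable_support_integral measurable_poisson_law[OF P])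
next
  case (seq U)
  define X where "X i (\<omega> :: real \<Rightarrow> nat) = (\<integral>\<^sup>+y. U i y \<partial>count_space {y. 0 < \<omega> y})" for i \<omega>
  have "incseq X"
    using seq(4) by (auto intro!: nn_integral_mono simp: X_def incseq_def le_fun_def)
  moreover have "X i \<in> borel_measurable P" for i
    unfolding X_def[abs_def] measurable_poisson_law[OF P]
    using seq(1) by (simp add: borel_measurable_support_integral)
  moreover have "(\<integral>\<^sup>+y. (SUP i. U i) y \<partial>count_space {y. 0 < \<omega> y}) = (SUP i. X i \<omega>)"
    for \<omega> :: "real \<Rightarrow> nat"
    unfolding X_def SUP_apply by (rule nn_integral_monotone_convergence_SUP[OF seq(4)]) simp
  ultimately have "(\<integral>\<^sup>+\<omega>. (\<integral>\<^sup>+y. (SUP i. U i) y \<partial>count_space {y. 0 < \<omega> y}) \<partial>P)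
      = (SUP i. \<integral>\<^sup>+\<omega>. X i \<omega> \<partial>P)"
    by (simp add: nn_integral_monotone_convergence_SUP)
  also have "\<dots> = (SUP i. \<integral>\<^sup>+y. U i y \<partial>lborel)" using seq(3) by (simp add: X_def)
  also have "\<dots> = (\<integral>\<^sup>+y. (SUP i. U i) y \<partial>lborel)"
    unfolding SUP_apply using seq(1) by (intro nn_integral_monotone_convergence_SUP[OF seq(4), symmetric]) simp
  finally show ?case .
qed

lemma borel_measurable_slice_measure:
  assumes C: "C \<in> sets (borel :: (real \<times> real) measure)"
  shows "(\<lambda>y. emeasure lborel {x::real. (x, y) \<in> C}) \<in> borel_measurable borel"
proof -
  have "C \<in> sets (lborel \<Otimes>\<^sub>M lborel)" using C unfolding lborel_prod by simp
  then have "(\<lambda>y. emeasure lborel ((\<lambda>x. (x, y)) -` C)) \<in> borel_measurable (lborel :: real measure)"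
    by (rule lborel_pair.measurable_emeasure_Pair2)
  then show ?thesis by (simp add: vimage_def)
qed

lemma random_measure_xi: "random_measure xi"
  unfolding random_measure_def
  using borel_measurable_support_integral[OF borel_measurable_slice_measure]
  by (simp add: emeasure_xi xi_fun_def cong: measurable_cong)

lemma random_measure_eta: "random_measure eta"
  unfolding random_measure_def eta_def by simp

lemma has_intensity_xi:
  assumes P: "poisson_law P"
  shows "has_intensity P xi 1"
  unfolding has_intensity_def
proof (intro ballI)
  fix C :: "(real \<times> real) set" assume C: "C \<in> sets borel"
  have "(\<integral>\<^sup>+\<omega>. emeasure (xi \<omega>) C \<partial>P) = (\<integral>\<^sup>+y. emeasure lborel {x. (x, y) \<in> C} \<partial>lborel)"
    using C campbell_support[OF P borel_measurable_slice_measure[OF C]] by (simp add: emeasure_xi xi_fun_def)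
  also have "\<dots> = emeasure (lborel \<Otimes>\<^sub>M lborel) C"
  proof -
    have "C \<in> sets (lborel \<Otimes>\<^sub>M lborel)" using C unfolding lborel_prod by simp
    then show ?thesis by (simp add: lborel_pair.emeasure_pair_measure_alt2 vimage_def)
  qed
  finally show "(\<integral>\<^sup>+\<omega>. emeasure (xi \<omega>) C \<partial>P) = ennreal 1 * emeasure lborel C"
    by (simp add: lborel_prod)
qed

lemma has_intensity_eta:
  assumes P: "poisson_law P"
  shows "has_intensity P eta 1"
  unfolding has_intensity_def eta_def
  using prob_space.emeasure_space_1[OF poisson_law_prob_space[OF P]] by simp

lemma jointly_stationary_xi_eta:
  assumes P: "poisson_law P"
  shows "jointly_stationary P xi eta"
  unfolding jointly_stationary_def
proof (intro allI impI)
  fix n :: nat and Cs Ds :: "nat \<Rightarrow> (real \<times> real) set" and z :: "real \<times> real"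
  assume CD: "\<forall>i<n. Cs i \<in> sets borel \<and> Ds i \<in> sets borel"
  let ?N = "Pi\<^sub>M {..<n} (\<lambda>_. (borel :: ennreal measure) \<Otimes>\<^sub>M (borel :: ennreal measure))"
  let ?F = "\<lambda>\<omega>. \<lambda>i\<in>{..<n}. (emeasure (xi \<omega>) (Cs i), emeasure (eta \<omega>) (Ds i))"
  let ?T = "\<lambda>\<omega>. \<lambda>i\<in>{..<n}. (emeasure (xi \<omega>) ((\<lambda>c. c + z) ` Cs i), emeasure (eta \<omega>) ((\<lambda>c. c + z) ` Ds i))"
  have F: "?F \<in> OmegaM \<rightarrow>\<^sub>M ?N"
  proof (rule measurable_restrict)
    fix i assume "i \<in> {..<n}"
    then have "(\<lambda>\<omega>. emeasure (xi \<omega>) (Cs i)) \<in> borel_measurable OmegaM"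
      using CD random_measure_xi by (simp add: random_measure_def)
    then show "(\<lambda>\<omega>. (emeasure (xi \<omega>) (Cs i), emeasure (eta \<omega>) (Ds i))) \<in> OmegaM \<rightarrow>\<^sub>M borel \<Otimes>\<^sub>M borel"
      by (simp add: eta_def)
  qed
  have "distr P ?N ?T = distr P ?N (?F \<circ> theta z)"
    using CD by (intro distr_cong)
      (auto simp: poisson_law_space[OF P] emeasure_xi_theta eta_def emeasure_lborel_translation)
  also have "\<dots> = distr (distr P OmegaM (theta z)) ?N ?F"
    using F measurable_theta by (intro distr_distr[symmetric]) (simp_all add: measurable_poisson_law[OF P])
  finally show "distr P ?N ?T = distr P ?N ?F" by (simp add: distr_theta_poisson[OF P])
qed

section \<open>Ergodicity\<close>

lemma prod_lessThan_add:
  fixes f :: "nat \<Rightarrow> 'a::comm_monoid_mult"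
  shows "(\<Prod>i<N + M. f i) = (\<Prod>i<N. f i) * (\<Prod>j<M. f (N + j))"
  by (induction M) (simp_all add: ac_simps)

lemma poisson_prob_concat_at:
  "poisson_prob (concat_at N D D') (concat_at N v w) (N + M) = poisson_prob D v N * poisson_prob D' w M"
  unfolding poisson_prob_def prod_lessThan_add by (simp add: concat_at_def)

lemma concat_at_PiE:
  "v \<in> {..<N} \<rightarrow>\<^sub>E A \<Longrightarrow> w \<in> {..<M} \<rightarrow>\<^sub>E A \<Longrightarrow> concat_at N v w \<in> {..<N + M} \<rightarrow>\<^sub>E A"
  unfolding concat_at_def by (auto simp: PiE_iff extensional_def)

lemma inj_on_concat_at:
  "inj_on (\<lambda>(v, w). concat_at N v w) (({..<N} \<rightarrow>\<^sub>E A) \<times> ({..<M} \<rightarrow>\<^sub>E A))"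
proof (rule inj_onI)
  fix x y assume x: "x \<in> ({..<N} \<rightarrow>\<^sub>E A) \<times> ({..<M} \<rightarrow>\<^sub>E A)" and y: "y \<in> ({..<N} \<rightarrow>\<^sub>E A) \<times> ({..<M} \<rightarrow>\<^sub>E A)"
    and eq: "(\<lambda>(v, w). concat_at N v w) x = (\<lambda>(v, w). concat_at N v w) y"
  obtain v w v' w' where xy: "x = (v, w)" "y = (v', w')" by (cases x, cases y)
  have "v = v'"
  proof (rule PiE_ext[of v "{..<N}" "\<lambda>_. A" v'])
    fix i assume "i \<in> {..<N}"
    then show "v i = v' i" using fun_cong[OF eq, of i] by (simp add: xy concat_at_def)
  qed (use x y xy in auto)
  moreover have "w = w'"
  proof (rule PiE_ext[of w "{..<M}" "\<lambda>_. A" w'])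
    fix i assume "i \<in> {..<M}"
    then show "w i = w' i" using fun_cong[OF eq, of "N + i"] by (simp add: xy concat_at_def)
  qed (use x y xy in auto)
  ultimately show "x = y" by (simp add: xy)
qed

lemma disjoint_family_on_concat_at:
  assumes "disjoint_family_on D {..<N}" "disjoint_family_on D' {..<M}"
    and "\<And>i j. i < N \<Longrightarrow> j < M \<Longrightarrow> D i \<inter> D' j = {}"
  shows "disjoint_family_on (concat_at N D D') {..<N + M}"
  unfolding disjoint_family_on_def
proof (intro ballI impI)
  fix i j assume ij: "i \<in> {..<N + M}" "j \<in> {..<N + M}" "i \<noteq> j"
  consider "i < N" "j < N" | "i < N" "j - N < M" "\<not> j < N" | "i - N < M" "\<not> i < N" "j < N"
    | "i - N < M" "j - N < M" "i - N \<noteq> j - N" "\<not> i < N" "\<not> j < N"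
    using ij by fastforce
  then show "concat_at N D D' i \<inter> concat_at N D D' j = {}"
  proof cases
    case 1
    then show ?thesis using assms(1) ij(3) by (simp add: concat_at_def disjoint_family_on_def)
  next
    case 2
    then show ?thesis using assms(3)[of i "j - N"] by (simp add: concat_at_def)
  next
    case 3
    then show ?thesis using assms(3)[of j "i - N"] by (auto simp: concat_at_def)
  next
    case 4
    then show ?thesis using assms(2) by (simp add: concat_at_def disjoint_family_on_def)
  qed
qed

lemma emeasure_count_events_Int:
  assumes P: "poisson_law P" and R: "R1 \<inter> R2 = {}"
    and X: "X \<in> count_events R1" and Y: "Y \<in> count_events R2"
  shows "emeasure P (X \<inter> Y) = emeasure P X * emeasure P Y"
proof -
  obtain N D V where D: "\<forall>j<N. D j \<in> sets borel \<and> bounded (D j)" and DR: "\<forall>j<N. D j \<subseteq> R1"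
    and D_disj: "disjoint_family_on D {..<N}" and V: "finite V" "V \<subseteq> {..<N} \<rightarrow>\<^sub>E UNIV"
    and X_eq: "X = (\<Union>v\<in>V. count_event D v N)"
    using X by (rule count_events_disjoint_UN)
  obtain M D' W where D': "\<forall>j<M. D' j \<in> sets borel \<and> bounded (D' j)" and DR': "\<forall>j<M. D' j \<subseteq> R2"
    and D'_disj: "disjoint_family_on D' {..<M}" and W: "finite W" "W \<subseteq> {..<M} \<rightarrow>\<^sub>E UNIV"
    and Y_eq: "Y = (\<Union>w\<in>W. count_event D' w M)"
    using Y by (rule count_events_disjoint_UN)
  define DD where "DD = concat_at N D D'"
  define cat where "cat = (\<lambda>(v :: nat \<Rightarrow> nat, w). concat_at N v w)"
  have DD: "\<forall>j<N + M. DD j \<in> sets borel \<and> bounded (DD j)"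
    using D D' by (auto simp: DD_def concat_at_def)
  have DD_disj: "disjoint_family_on DD {..<N + M}"
    unfolding DD_def using D_disj D'_disj DR DR' R by (intro disjoint_family_on_concat_at) blast+
  have inj: "inj_on cat (V \<times> W)"
    unfolding cat_def by (rule inj_on_subset[OF inj_on_concat_at]) (use V(2) W(2) in blast)
  have cat_V_W: "cat ` (V \<times> W) \<subseteq> {..<N + M} \<rightarrow>\<^sub>E UNIV"
    using V(2) W(2) by (auto simp: cat_def intro!: concat_at_PiE)
  have "X \<inter> Y = (\<Union>(v, w)\<in>V \<times> W. count_event D v N \<inter> count_event D' w M)"
    unfolding X_eq Y_eq by blast
  also have "\<dots> = (\<Union>x\<in>V \<times> W. count_event DD (cat x) (N + M))"
    by (simp add: count_event_Int cat_def DD_def case_prod_unfold)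
  also have "\<dots> = (\<Union>u\<in>cat ` (V \<times> W). count_event DD u (N + M))" by simp
  finally have "emeasure P (X \<inter> Y) = emeasure P (\<Union>u\<in>cat ` (V \<times> W). count_event DD u (N + M))"
    by simp
  also have "\<dots> = (\<Sum>u\<in>cat ` (V \<times> W). poisson_prob DD u (N + M))"
    by (rule emeasure_UN_count_events[OF P DD DD_disj _ cat_V_W]) (use V(1) W(1) in simp)
  also have "\<dots> = (\<Sum>(v, w)\<in>V \<times> W. poisson_prob D v N * poisson_prob D' w M)"
    unfolding sum.reindex[OF inj] by (simp add: cat_def DD_def poisson_prob_concat_at case_prod_unfold)
  also have "\<dots> = emeasure P X * emeasure P Y"
    unfolding X_eq Y_eq emeasure_UN_count_events[OF P D D_disj V] emeasure_UN_count_events[OF P D' D'_disj W]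
    by (simp add: sum_product sum.cartesian_product)
  finally show ?thesis .
qed

lemma indep_sigma_count_events:
  assumes P: "poisson_law P" and R: "R1 \<inter> R2 = {}"
    and X: "X \<in> sigma_sets Omega (count_events R1)" and Y: "Y \<in> sigma_sets Omega (count_events R2)"
  shows "measure P (X \<inter> Y) = measure P X * measure P Y"
proof -
  interpret prob_space P by (rule poisson_law_prob_space[OF P])
  have events: "count_events R \<subseteq> events" for R
    using count_events_subset_sets poisson_law_sets[OF P] by blast
  have "indep_set (count_events R1) (count_events R2)"
    unfolding indep_sets2_eq
  proof (intro conjI events ballI)
    fix a b assume "a \<in> count_events R1" "b \<in> count_events R2"
    then show "prob (a \<inter> b) = prob a * prob b"
      using emeasure_count_events_Int[OF P R] by (simp add: measure_def enn2real_mult)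
  qed
  then have "indep_set (sigma_sets (space P) (count_events R1)) (sigma_sets (space P) (count_events R2))"
    by (rule indep_set_sigma_sets[OF _ Int_stable_count_events Int_stable_count_events])
  then have "\<forall>a\<in>sigma_sets Omega (count_events R1). \<forall>b\<in>sigma_sets Omega (count_events R2).
      prob (a \<inter> b) = prob a * prob b"
    unfolding indep_sets2_eq poisson_law_space[OF P] by (elim conjE)
  then show ?thesis using X Y by blast
qed

lemma (in prob_space) prob_sym_diff_UN_le:
  fixes A X :: "nat \<Rightarrow> 'a set"
  assumes "\<And>i. i < K \<Longrightarrow> A i \<in> events" "\<And>i. i < K \<Longrightarrow> X i \<in> events"
  shows "prob (sym_diff (\<Union>i<K. A i) (\<Union>i<K. X i)) \<le> (\<Sum>i<K. prob (sym_diff (A i) (X i)))"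
proof -
  have sd: "sym_diff (A i) (X i) \<in> events" if "i < K" for i
    using assms[OF that] by auto
  have "prob (sym_diff (\<Union>i<K. A i) (\<Union>i<K. X i)) \<le> prob (\<Union>i<K. sym_diff (A i) (X i))"
    using sd by (intro finite_measure_mono sets.finite_UN) auto
  also have "\<dots> \<le> (\<Sum>i<K. prob (sym_diff (A i) (X i)))"
    using sd by (intro measure_UNION_le) auto
  finally show ?thesis .
qed

lemma (in prob_space) ex_prob_UN_tail_less:
  fixes A :: "nat \<Rightarrow> 'a set"
  assumes "range A \<subseteq> events" "0 < e"
  obtains K where "prob ((\<Union>i. A i) - (\<Union>i<K. A i)) < e"
proof -
  have "incseq (\<lambda>K. \<Union>i<K. A i)" by (rule incseq_SucI) (simp add: lessThan_Suc)
  then have "(\<lambda>K. prob (\<Union>i<K. A i)) \<longlonglongrightarrow> prob (\<Union>K. \<Union>i<K. A i)"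
    using assms(1) by (intro finite_Lim_measure_incseq) auto
  moreover have "(\<Union>K. \<Union>i<K. A i) = (\<Union>i. A i)"
  proof -
    have "(\<Union>K. \<Union>i<K. A i) = (\<Union>i\<in>(\<Union>K. {..<K}). A i)" by blast
    then show ?thesis by (simp only: UN_lessThan_UNIV)
  qed
  ultimately have "(\<lambda>K. prob (\<Union>i<K. A i)) \<longlonglongrightarrow> prob (\<Union>i. A i)" by simp
  from LIMSEQ_D[OF this assms(2)] obtain K where "\<forall>n\<ge>K. norm (prob (\<Union>i<n. A i) - prob (\<Union>i. A i)) < e"
    by blast
  then have "\<bar>prob (\<Union>i<K. A i) - prob (\<Union>i. A i)\<bar> < e" by simp
  then have "prob (\<Union>i. A i) - prob (\<Union>i<K. A i) < e" by linarith
  moreover have "prob ((\<Union>i. A i) - (\<Union>i<K. A i)) = prob (\<Union>i. A i) - prob (\<Union>i<K. A i)"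
    using assms(1) by (intro finite_measure_Diff) auto
  ultimately show thesis by (intro that[of K]) simp
qed

lemma (in prob_space) approx_by_increasing_sigma_sets:
  assumes H: "incseq H" "\<And>m. H m \<subseteq> events" and G: "G \<subseteq> (\<Union>m. H m)"
    and A: "A \<in> sigma_sets (space M) G"
  shows "\<forall>e>0. \<exists>m. \<exists>X\<in>sigma_sets (space M) (H m). prob (sym_diff A X) < e"
proof -
  have sigma_H: "sigma_sets (space M) (H m) \<subseteq> events" for m
    using H(2) by (rule sets.sigma_sets_subset)
  have "G \<subseteq> events" using G H(2) by blast
  then have sigma_G: "sigma_sets (space M) G \<subseteq> events" by (rule sets.sigma_sets_subset)
  show ?thesis
    using A
  proof (induct rule: sigma_sets.induct)
    case (Basic a)
    then obtain m where "a \<in> H m" using G by blast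
    then show ?case by (intro allI impI exI[of _ m] bexI[of _ a]) (simp_all add: sigma_sets.Basic)
  next
    case Empty
    show ?case by (intro allI impI exI[of _ 0] bexI[of _ "{}"]) (simp_all add: sigma_sets.Empty)
  next
    case (Compl a)
    have "a \<subseteq> space M" using Compl(1) sigma_G sets.sets_into_space by blast
    show ?case
    proof (intro allI impI)
      fix e :: real assume "0 < e"
      then obtain m X where X: "X \<in> sigma_sets (space M) (H m)" "prob (sym_diff a X) < e"
        using Compl(2) by blast
      then have "X \<subseteq> space M" using sigma_H sets.sets_into_space by blast
      then have "sym_diff (space M - a) (space M - X) = sym_diff a X"
        using \<open>a \<subseteq> space M\<close> by blast
      then show "\<exists>m. \<exists>X\<in>sigma_sets (space M) (H m). prob (sym_diff (space M - a) X) < e"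
        using X by (intro exI[of _ m] bexI[of _ "space M - X"] sigma_sets.Compl) simp_all
    qed
  next
    case (Union a)
    have a: "range a \<subseteq> events" using Union(1) sigma_G by blast
    show ?case
    proof (intro allI impI)
      fix e :: real assume e: "0 < e"
      obtain K where K: "prob ((\<Union>i. a i) - (\<Union>i<K. a i)) < e / 2"
        using a by (rule ex_prob_UN_tail_less[of a "e / 2"]) (use e in simp)
      define e' where "e' = e / (2 * (real K + 1))"
      have "\<forall>i. \<exists>m. \<exists>X\<in>sigma_sets (space M) (H m). prob (sym_diff (a i) X) < e'"
        using Union(2) e by (simp add: e'_def)
      then obtain m X where X: "\<And>i. X i \<in> sigma_sets (space M) (H (m i))"
        "\<And>i. prob (sym_diff (a i) (X i)) < e'"
        by metis
      define m' where "m' = (\<Sum>i<K. m i)"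
      interpret sigma_H_m': sigma_algebra "space M" "sigma_sets (space M) (H m')"
        using H(2) sets.sets_into_space by (intro sigma_algebra_sigma_sets) blast
      have "X i \<in> sigma_sets (space M) (H m')" if "i < K" for i
      proof -
        have "m i \<le> m'" unfolding m'_def using that by (intro member_le_sum) auto
        then show ?thesis using X(1) sigma_sets_mono'[OF monoD[OF H(1)]] by blast
      qed
      then have X': "(\<Union>i<K. X i) \<in> sigma_sets (space M) (H m')" by blast
      have X_events: "X i \<in> events" for i using X(1) sigma_H by blast
      have "sym_diff (\<Union>i. a i) (\<Union>i<K. X i)
          \<subseteq> sym_diff (\<Union>i<K. a i) (\<Union>i<K. X i) \<union> ((\<Union>i. a i) - (\<Union>i<K. a i))" by blast
      then have "prob (sym_diff (\<Union>i. a i) (\<Union>i<K. X i))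
          \<le> prob (sym_diff (\<Union>i<K. a i) (\<Union>i<K. X i) \<union> ((\<Union>i. a i) - (\<Union>i<K. a i)))"
        using a X_events by (intro finite_measure_mono) auto
      also have "\<dots> \<le> prob (sym_diff (\<Union>i<K. a i) (\<Union>i<K. X i)) + prob ((\<Union>i. a i) - (\<Union>i<K. a i))"
        using a X_events by (intro measure_Un_le) auto
      also have "prob (sym_diff (\<Union>i<K. a i) (\<Union>i<K. X i)) \<le> (\<Sum>i<K. prob (sym_diff (a i) (X i)))"
        using a X_events by (intro prob_sym_diff_UN_le) auto
      also have "\<dots> \<le> real K * e'"
        using sum_bounded_above[of "{..<K}" "\<lambda>i. prob (sym_diff (a i) (X i))" e'] X(2) less_imp_le
        by auto
      also have "real K * e' \<le> e / 2"
        using e by (simp add: e'_def field_simps)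
      finally show "\<exists>m. \<exists>X\<in>sigma_sets (space M) (H m). prob (sym_diff (\<Union>i. a i) X) < e"
        using X' K by (intro exI[of _ m'] bexI[of _ "\<Union>i<K. X i"]) auto
    qed
  qed
qed

lemma count_events_window:
  assumes "A \<in> count_events UNIV"
  obtains m :: nat where "A \<in> count_events {- real m..real m}"
proof -
  obtain B k n where A: "A = count_event B k n" and B: "\<forall>i<n. B i \<in> sets borel \<and> bounded (B i)"
    using assms unfolding count_events_def by blast
  have "bounded (\<Union>i<n. B i)" using B by (intro bounded_UN) auto
  then obtain c where c: "\<forall>x\<in>(\<Union>i<n. B i). \<bar>x\<bar> \<le> c" unfolding bounded_real by blast
  obtain m :: nat where "c \<le> real m" using real_arch_simple by blast
  then have "\<forall>i<n. B i \<subseteq> {- real m..real m}" using c by (force simp: abs_le_iff)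
  then have "A \<in> count_events {- real m..real m}" unfolding A count_events_def using B by blast
  then show thesis by (rule that)
qed

lemma theta_vimage_count_events:
  assumes "A \<in> count_events R"
  shows "theta z -` A \<inter> Omega \<in> count_events ((\<lambda>x. x + snd z) ` R)"
proof -
  obtain B k n where A: "A = count_event B k n" and B: "\<forall>i<n. B i \<in> sets borel \<and> bounded (B i) \<and> B i \<subseteq> R"
    using assms unfolding count_events_def by blast
  define B' where "B' i = (\<lambda>x. x + snd z) ` B i" for i
  have "B' i \<in> sets borel \<and> bounded (B' i) \<and> B' i \<subseteq> (\<lambda>x. x + snd z) ` R" if "i < n" for i
    using B that translation_bounded_borel[of "B i" "snd z"] unfolding B'_def by blast
  then show ?thesis
    unfolding A theta_vimage_count_event count_events_def B'_def[symmetric] by blast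
qed

lemma theta_vimage_sigma_count_events:
  assumes X: "X \<in> sigma_sets Omega (count_events R)"
  shows "theta z -` X \<inter> Omega \<in> sigma_sets Omega (count_events ((\<lambda>x. x + snd z) ` R))"
proof -
  have "theta z \<in> Omega \<rightarrow> Omega" using theta_in_Omega by blast
  then have "{theta z -` A \<inter> Omega | A. A \<in> sigma_sets Omega (count_events R)}
      = sigma_sets Omega {theta z -` A \<inter> Omega | A. A \<in> count_events R}"
    by (rule sigma_sets_vimage_commute)
  moreover have "\<dots> \<subseteq> sigma_sets Omega (count_events ((\<lambda>x. x + snd z) ` R))"
    by (rule sigma_sets_mono') (use theta_vimage_count_events in blast)
  ultimately show ?thesis using X by blast
qed

lemma (in prob_space) abs_prob_diff_le_sym_diff:
  assumes "S \<in> events" "T \<in> events"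
  shows "\<bar>prob S - prob T\<bar> \<le> prob (sym_diff S T)"
proof -
  have "prob S \<le> prob T + prob (sym_diff S T)" "prob T \<le> prob S + prob (sym_diff S T)"
    using assms by (auto intro!: order_trans[OF finite_measure_mono measure_Un_le])
  then show ?thesis by linarith
qed

text \<open>The mixing argument: if \<open>X\<close> and its independent copy \<open>X'\<close> both approximate \<open>A\<close> up to
  \<open>\<delta>\<close>, then \<open>p = P(A)\<close> satisfies \<open>\<bar>p - p\<^sup>2\<bar> \<le> 4\<delta>\<close>.\<close>

lemma (in prob_space) zero_one_law_independent_copies:
  assumes A: "A \<in> events"
    and approx: "\<And>e. 0 < e \<Longrightarrow> \<exists>X X'. X \<in> events \<and> X' \<in> events \<and>
      prob (X \<inter> X') = prob X * prob X' \<and> prob X' = prob X \<and>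
      prob (sym_diff A X) < e \<and> prob (sym_diff A X') < e"
  shows "prob A = 0 \<or> prob A = 1"
proof -
  let ?p = "prob A"
  have bound: "\<bar>?p - ?p * ?p\<bar> < 4 * e" if e: "0 < e" for e
  proof -
    obtain X X' where X: "X \<in> events" "X' \<in> events" "prob (X \<inter> X') = prob X * prob X'"
      "prob X' = prob X" "prob (sym_diff A X) < e" "prob (sym_diff A X') < e"
      using approx[OF e] by blast
    let ?q = "prob X"
    have "prob (sym_diff A (X \<inter> X')) \<le> prob (sym_diff A X \<union> sym_diff A X')"
      using A X by (intro finite_measure_mono) auto
    also have "\<dots> \<le> prob (sym_diff A X) + prob (sym_diff A X')"
      using A X by (intro measure_Un_le) auto
    finally have "\<bar>?p - ?q * ?q\<bar> < 2 * e"
      using abs_prob_diff_le_sym_diff[of A "X \<inter> X'"] A X by auto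
    moreover have "\<bar>?q * ?q - ?p * ?p\<bar> \<le> 2 * e"
    proof -
      have "?q * ?q - ?p * ?p = (?q - ?p) * (?q + ?p)" by (simp add: algebra_simps)
      then have "\<bar>?q * ?q - ?p * ?p\<bar> = \<bar>?q - ?p\<bar> * \<bar>?q + ?p\<bar>" by (simp only: abs_mult)
      also have "\<dots> \<le> e * 2"
      proof (rule mult_mono)
        show "\<bar>?q - ?p\<bar> \<le> e"
          using abs_prob_diff_le_sym_diff[OF A X(1)] X(5) by (simp add: abs_minus_commute)
        show "\<bar>?q + ?p\<bar> \<le> 2"
          unfolding abs_le_iff using prob_le_1[of X] prob_le_1[of A] measure_nonneg[of M X] measure_nonneg[of M A]
          by linarith
      qed (use e in auto)
      finally show ?thesis by simp
    qed
    ultimately show ?thesis by linarith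
  qed
  have "?p = ?p * ?p"
  proof (rule ccontr)
    assume "?p \<noteq> ?p * ?p"
    then have "0 < \<bar>?p - ?p * ?p\<bar> / 4" by simp
    from bound[OF this] show False by simp
  qed
  then show ?thesis by (cases "?p = 0") auto
qed

lemma flow_ergodic_poisson:
  assumes P: "poisson_law P"
  shows "flow_ergodic P"
  unfolding flow_ergodic_def
proof (intro ballI impI)
  fix A assume A: "A \<in> sets OmegaM" and inv: "\<forall>z. theta z -` A \<inter> Omega = A"
  interpret prob_space P by (rule poisson_law_prob_space[OF P])
  have sets_P: "sets P = sets OmegaM" by (rule poisson_law_sets[OF P])
  have "A \<in> sigma_sets (space P) (count_events UNIV)"
    using A by (simp add: sets_OmegaM_count_events poisson_law_space[OF P])
  then have "\<forall>e>0. \<exists>m. \<exists>X\<in>sigma_sets (space P) (count_events {- real m..real m}). prob (sym_diff A X) < e"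
  proof (rule approx_by_increasing_sigma_sets[rotated 3])
    show "incseq (\<lambda>m::nat. count_events {- real m..real m})"
      by (auto simp: incseq_def intro!: count_events_mono)
    show "count_events {- real m..real m} \<subseteq> events" for m :: nat
      using count_events_subset_sets sets_P by simp
    show "count_events UNIV \<subseteq> (\<Union>m::nat. count_events {- real m..real m})"
    proof
      fix X assume "X \<in> count_events UNIV"
      then obtain m :: nat where "X \<in> count_events {- real m..real m}" by (rule count_events_window)
      then show "X \<in> (\<Union>m::nat. count_events {- real m..real m})" by blast
    qed
  qed
  then have windows: "\<exists>m. \<exists>X\<in>sigma_sets Omega (count_events {- real m..real m}). prob (sym_diff A X) < e"
    if "0 < e" for e
    using that by (simp add: poisson_law_space[OF P])
  show "prob A = 0 \<or> prob A = 1"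
  proof (rule zero_one_law_independent_copies)
    show "A \<in> events" using A sets_P by simp
    fix e :: real assume "0 < e"
    then obtain m X where X: "X \<in> sigma_sets Omega (count_events {- real m..real m})"
      and AX: "prob (sym_diff A X) < e" using windows by blast
    define z where "z = (0::real, 2 * real m + 1)"
    define X' where "X' = theta z -` X \<inter> Omega"
    have X': "X' \<in> sigma_sets Omega (count_events ((\<lambda>x. x + snd z) ` {- real m..real m}))"
      unfolding X'_def by (rule theta_vimage_sigma_count_events[OF X])
    have disj: "{- real m..real m} \<inter> (\<lambda>x. x + snd z) ` {- real m..real m} = {}"
      by (auto simp: z_def)
    have events: "sigma_sets Omega (count_events R) \<subseteq> events" for R
      using sigma_count_events_subset_sets sets_P by simp
    have "sym_diff A X' = theta z -` sym_diff A X \<inter> Omega"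
      using inv[rule_format, of z] unfolding X'_def by blast
    moreover have "sym_diff A X \<in> sets OmegaM" using A X events sets_P by auto
    ultimately have "prob (sym_diff A X') = prob (sym_diff A X)"
      using measure_theta_vimage[OF P, of "sym_diff A X" z] by (simp only:)
    moreover have "prob X' = prob X"
      unfolding X'_def using X events sets_P by (intro measure_theta_vimage[OF P]) auto
    moreover have "X \<in> events" "X' \<in> events" using X X' events by blast+
    ultimately show "\<exists>X X'. X \<in> events \<and> X' \<in> events \<and> prob (X \<inter> X') = prob X * prob X' \<and>
        prob X' = prob X \<and> prob (sym_diff A X) < e \<and> prob (sym_diff A X') < e"
      using AX indep_sigma_count_events[OF P disj X X'] by (intro exI[of _ X] exI[of _ X']) simp
  qed
qed

section \<open>Non-existence of a balancing allocation\<close>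

lemma allocation_horizontal_shift:
  assumes "\<forall>x y. \<tau> (theta y \<omega>) (x - y) = map_option (\<lambda>t. t - y) (\<tau> \<omega> x)"
  shows "\<tau> \<omega> (x, y) = map_option (\<lambda>t. t + (x, 0)) (\<tau> \<omega> (0, y))"
proof -
  have "\<tau> (theta (- x, 0) \<omega>) ((0, y) - (- x, 0)) = map_option (\<lambda>t. t - (- x, 0)) (\<tau> \<omega> (0, y))"
    using assms by blast
  moreover have "theta (- x, 0) \<omega> = \<omega>" by (simp add: theta_def)
  moreover have "(\<lambda>t::real \<times> real. t - (- x, 0)) = (\<lambda>t. t + (x, 0))" by (auto simp: fun_eq_iff)
  ultimately show ?thesis by simp
qed

lemma horizontal_lines_borel:
  assumes "countable Y"
  shows "{s :: real \<times> real. snd s \<in> Y} \<in> sets borel" "{s :: real \<times> real. snd s \<notin> Y} \<in> sets borel"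
proof -
  have Y: "Y \<in> sets borel" by (rule sets.countable[OF _ assms]) auto
  have "{s :: real \<times> real. snd s \<in> Y} = UNIV \<times> Y" by auto
  also have "\<dots> \<in> sets (borel \<Otimes>\<^sub>M borel)" using Y by (intro pair_measureI) auto
  finally show "{s :: real \<times> real. snd s \<in> Y} \<in> sets borel" unfolding borel_prod .
  have "{s :: real \<times> real. snd s \<notin> Y} = UNIV \<times> (UNIV - Y)" by auto
  also have "\<dots> \<in> sets (borel \<Otimes>\<^sub>M borel)" using Y by (intro pair_measureI) auto
  finally show "{s :: real \<times> real. snd s \<notin> Y} \<in> sets borel" unfolding borel_prod .
qed

lemma emeasure_horizontal_lines:
  assumes "countable Y"
  shows "emeasure lborel {s :: real \<times> real. snd s \<in> Y} = 0"
proof -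
  have Y: "Y \<in> sets borel" by (rule sets.countable[OF _ assms]) auto
  have "emeasure (lborel \<Otimes>\<^sub>M lborel) ((UNIV :: real set) \<times> Y) = emeasure lborel (UNIV :: real set) * emeasure lborel Y"
    using Y by (intro lborel.emeasure_pair_measure_Times) auto
  also have "\<dots> = 0" using emeasure_lborel_countable[OF assms] by simp
  finally have "emeasure lborel ((UNIV :: real set) \<times> Y) = 0" by (simp add: lborel_prod)
  moreover have "{s :: real \<times> real. snd s \<in> Y} = UNIV \<times> Y" by auto
  ultimately show ?thesis by simp
qed

lemma emeasure_lborel_off_horizontal_lines:
  assumes "countable Y"
  shows "emeasure lborel {s :: real \<times> real. snd s \<notin> Y} = \<infinity>"
proof -
  let ?off = "{s :: real \<times> real. snd s \<notin> Y}" and ?on = "{s :: real \<times> real. snd s \<in> Y}"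
  have "emeasure lborel (?off \<union> ?on) \<le> emeasure lborel ?off + emeasure lborel ?on"
    using horizontal_lines_borel[OF assms] by (intro emeasure_subadditive) simp_all
  moreover have "?off \<union> ?on = UNIV" by blast
  ultimately show ?thesis by (simp add: emeasure_horizontal_lines[OF assms] top_unique)
qed

lemma emeasure_xi_off_support:
  assumes "\<omega> \<in> Omega"
  shows "emeasure (xi \<omega>) {s. snd s \<notin> {y. 0 < \<omega> y}} = 0"
proof -
  have "{s :: real \<times> real. snd s \<notin> {y. 0 < \<omega> y}} \<in> sets borel"
    by (rule horizontal_lines_borel(2)[OF countable_support[OF assms]])
  then show ?thesis by (simp add: emeasure_xi xi_fun_def nn_integral_0_iff_AE AE_count_space)
qed

lemma (in prob_space) AE_imp_ex:
  assumes "AE x in M. P x"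
  shows "\<exists>x\<in>space M. P x"
proof (rule ccontr)
  assume none: "\<not> (\<exists>x\<in>space M. P x)"
  have "AE x in M. False" using assms by (rule AE_mp) (rule AE_I2, use none in blast)
  then show False by (simp add: AE_False)
qed

text \<open>By covariance, every point of the line at height \<open>y\<close> of the support is sent to the
  horizontal line through \<open>\<tau>(\<omega>, (0, y))\<close>; outside the countably many target lines lies a set
  of infinite Lebesgue measure that receives no \<open>\<xi>\<close>-mass.\<close>

lemma no_balancing_allocation:
  assumes P: "poisson_law P"
  shows "\<not> (\<exists>\<tau>. allocation P \<tau> \<and> balances P \<tau> xi eta)"
proof
  assume "\<exists>\<tau>. allocation P \<tau> \<and> balances P \<tau> xi eta"
  then obtain \<tau> where al: "allocation P \<tau>" and bal: "balances P \<tau> xi eta" by blast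
  define good where "good \<omega> \<longleftrightarrow>
    (\<forall>x y. \<tau> (theta y \<omega>) (x - y) = map_option (\<lambda>t. t - y) (\<tau> \<omega> x)) \<and>
    (emeasure (xi \<omega>) {s. \<tau> \<omega> s = None} = 0 \<and>
      (\<forall>C \<in> sets (borel :: (real \<times> real) measure).
        (\<integral>\<^sup>+ s. indicator {s. \<exists>c\<in>C. \<tau> \<omega> s = Some c} s \<partial>xi \<omega>) = emeasure (eta \<omega>) C))" for \<omega>
  have "AE \<omega> in P. good \<omega>"
    using al bal unfolding allocation_def balances_def good_def by (intro AE_conjI) auto
  then obtain \<omega> where "\<omega> \<in> space P" "good \<omega>"
    using prob_space.AE_imp_ex[OF poisson_law_prob_space[OF P]] by blast
  then have \<omega>: "\<omega> \<in> Omega"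
    and cov: "\<forall>x y. \<tau> (theta y \<omega>) (x - y) = map_option (\<lambda>t. t - y) (\<tau> \<omega> x)"
    and balanced: "\<forall>C \<in> sets (borel :: (real \<times> real) measure).
        (\<integral>\<^sup>+ s. indicator {s. \<exists>c\<in>C. \<tau> \<omega> s = Some c} s \<partial>xi \<omega>) = emeasure lborel C"
    unfolding good_def eta_def poisson_law_space[OF P] by blast+
  define S where "S = {y. 0 < \<omega> y}"
  define Y where "Y = (\<lambda>y. snd (the (\<tau> \<omega> (0, y)))) ` S"
  have "countable Y" unfolding Y_def S_def using countable_support[OF \<omega>] by simp
  define C where "C = {c :: real \<times> real. snd c \<notin> Y}"
  have C: "C \<in> sets borel"
    unfolding C_def by (rule horizontal_lines_borel(2)[OF \<open>countable Y\<close>])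
  have target: "snd s \<notin> S" if \<tau>_s: "\<tau> \<omega> s = Some c" and "c \<in> C" for s c
  proof
    assume "snd s \<in> S"
    obtain x y where s: "s = (x, y)" by (cases s)
    obtain c0 where c0: "\<tau> \<omega> (0, y) = Some c0" "c = c0 + (x, 0)"
      using \<tau>_s allocation_horizontal_shift[OF cov, of x y] by (auto simp: s)
    have "snd c = snd (the (\<tau> \<omega> (0, y)))" using c0 by simp
    also have "\<dots> \<in> Y" using \<open>snd s \<in> S\<close> unfolding Y_def s by simp
    finally show False using \<open>c \<in> C\<close> by (simp add: C_def)
  qed
  have "indicator {s. \<exists>c\<in>C. \<tau> \<omega> s = Some c} s \<le> (indicator {s. snd s \<notin> S} s :: ennreal)" for s
    unfolding indicator_def using target[of s] by auto
  then have "(\<integral>\<^sup>+ s. indicator {s. \<exists>c\<in>C. \<tau> \<omega> s = Some c} s \<partial>xi \<omega>)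
      \<le> (\<integral>\<^sup>+ s. indicator {s. snd s \<notin> S} s \<partial>xi \<omega>)"
    by (rule nn_integral_mono)
  then have "emeasure lborel C \<le> (\<integral>\<^sup>+ s. indicator {s. snd s \<notin> S} s \<partial>xi \<omega>)"
    using balanced C by simp
  also have "\<dots> = emeasure (xi \<omega>) {s. snd s \<notin> S}"
    using horizontal_lines_borel(2)[OF countable_support[OF \<omega>]] unfolding S_def
    by (intro nn_integral_indicator) simp
  also have "\<dots> = 0" unfolding S_def by (rule emeasure_xi_off_support[OF \<omega>])
  finally show False using emeasure_lborel_off_horizontal_lines[OF \<open>countable Y\<close>] by (simp add: C_def)
qed

theorem mainTheorem10:
  assumes "poisson_law P"
  shows "random_measure xi \<and> random_measure eta \<and>
         diffuse xi \<and> diffuse eta \<and>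
         flow_adapted xi \<and> flow_adapted eta \<and>
         flow_stationary P \<and> jointly_stationary P xi eta \<and> flow_ergodic P \<and>
         has_intensity P xi 1 \<and> has_intensity P eta 1 \<and>
         \<not> (\<exists>\<tau>. allocation P \<tau> \<and> balances P \<tau> xi eta)"
  by (intro conjI random_measure_xi random_measure_eta diffuse_xi diffuse_eta flow_adapted_xi
      flow_adapted_eta flow_stationary_poisson[OF assms] jointly_stationary_xi_eta[OF assms]
      flow_ergodic_poisson[OF assms] has_intensity_xi[OF assms] has_intensity_eta[OF assms]
      no_balancing_allocation[OF assms])

end
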